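(* Let $(G_x \mid x \in \mathbb{N}_0)$ be the coclass family defined by $\eta \in H^3(P,T)$ and $x \in \mathbb{N}_0$. The objects of the Quillen category $\mathcal{A}_p(G_x)$ (the elementary abelian subgroups of $G_x$) are exactly the elements of the disjoint union of the sets $\mathcal{C}_x(L)$ for $L \in \mathcal{L}_\eta$.
   Context: Conventions: normalised cocycles $Z^n$, coboundaries $B^n$, cohomology $H^n$ for right modules written additively; $\mathrm{Ext}(\tau)$ is $G\times M$ with $(g,m)(h,n)=(gh,m^h+n+\tau(g,h))$. Setting: $S$ infinite pro-$p$-group of finite coclass; $T=\gamma_\ell(S)$ ($\ell$ large), $T\cong\mathbb{Z}_p^d$, $P=S/T$ finite, $|P|=p^m$, the series $T_0=T$, $T_{i+1}=[T_i,S]$ with all indices $p$; $T$ an additive $P$-module via conjugation; $S=\mathrm{Ext}(\rho)$, $\rho\in Z^2(P,T)$. $\mathcal{L}$ = elementary abelian $L\leq P$ with $\rho_L\in B^2(L,T)$; $\mathcal{L}_\eta=\{L\in\mathcal{L}\mid \mathrm{res}^P_L(\eta)=0\in H^3(L,T)\}$. Coclass family: $e=3m$, $M_x=T/p^{x+e}T$; $pro_x: Z^2(P,T)\to Z^2(P,M_x)$ induced by projection with image $I^2(P,M_x)$; $J^2(P,M_x)$ the image of $Z^2(P,p^{x+e-m}T/p^{x+e}T)\to Z^2(P,M_x)$ induced by inclusion; fixed complements $K^2(P,M_x)\leq J^2(P,M_x)$ of $I^2(P,M_x)$ in $Z^2(P,M_x)$ with $mul(K^2(P,M_x))=K^2(P,M_{x+1})$,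 $mul$ induced by $t+p^{x+e}T\mapsto pt+p^{x+e+1}T$. The composite $Z^2(P,M_x)\to H^2(P,M_x)\to H^3(P,p^{x+e}T)\to H^3(P,T)$ (quotient, connecting homomorphism, division by $p^{x+e}$) restricts to an isomorphism on $K^2(P,M_x)$; $\eta_x$ is the preimage of $\eta$, $\rho_x=pro_x(\rho)$, $G_x=\mathrm{Ext}(\rho_x+\eta_x)$, $M_x$ identified with $\{(1,m)\}$. For $L\leq P$, $\overline{L}_x$ is the full preimage of $L$ in $G_x$ under $(g,m)\mapsto g$. For $L\in\mathcal{L}_\eta$, $\overline{L}_x$ splits over $M_x$; fix a complement $C_{L,x}=\{c_{L,x}(l)\mid l\in L\}$ with $c_{L,x}(l)=(l,t_{L,x}(l))$, and for $\gamma\in Z^1(L,M_x)$ put $C_{L,x}(\gamma)=\{(l,t_{L,x}(l)+\gamma(l))\mid l\in L\}$. Let $\mathcal{O}_x(L)$ be the set of elementary abelian subgroups of $M_x$ centralised by $L$, and $\mathcal{C}_x(L)=\{C_{L,x}(\gamma)\times O\mid \gamma\in Z^1(L,M_x),\ O\in\mathcal{O}_x(L)\}$. *)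

theory Defs
  imports "HOL-Algebra.Algebra"
begin

text \<open>A p-adic integer is the compatible sequence of its residues mod p^n.\<close>
definition zp :: "nat \<Rightarrow> (nat \<Rightarrow> int) set" where
  "zp p = {a. \<forall>n. 0 \<le> a n \<and> a n < int p ^ n \<and> a (Suc n) mod (int p ^ n) = a n}"

text \<open>Elements of Z_p^d: coordinates i < d are p-adic integers, the others are zero.\<close>
definition Zpd :: "nat \<Rightarrow> nat \<Rightarrow> (nat \<Rightarrow> nat \<Rightarrow> int) set" where
  "Zpd p d = {v. (\<forall>i<d. v i \<in> zp p) \<and> (\<forall>i\<ge>d. v i = (\<lambda>n. 0))}"

definition zadd :: "nat \<Rightarrow> (nat \<Rightarrow> nat \<Rightarrow> int) \<Rightarrow> (nat \<Rightarrow> nat \<Rightarrow> int) \<Rightarrow> (nat \<Rightarrow> nat \<Rightarrow> int)" where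
  "zadd p v w = (\<lambda>i n. (v i n + w i n) mod (int p ^ n))"

definition zneg :: "nat \<Rightarrow> (nat \<Rightarrow> nat \<Rightarrow> int) \<Rightarrow> (nat \<Rightarrow> nat \<Rightarrow> int)" where
  "zneg p v = (\<lambda>i n. (- v i n) mod (int p ^ n))"

definition zsmul :: "nat \<Rightarrow> int \<Rightarrow> (nat \<Rightarrow> nat \<Rightarrow> int) \<Rightarrow> (nat \<Rightarrow> nat \<Rightarrow> int)" where
  "zsmul p c v = (\<lambda>i n. (c * v i n) mod (int p ^ n))"

definition zpscal :: "nat \<Rightarrow> (nat \<Rightarrow> int) \<Rightarrow> (nat \<Rightarrow> nat \<Rightarrow> int) \<Rightarrow> (nat \<Rightarrow> nat \<Rightarrow> int)" where
  "zpscal p a v = (\<lambda>i n. (a n * v i n) mod (int p ^ n))"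

definition zdivp :: "nat \<Rightarrow> nat \<Rightarrow> nat \<Rightarrow> (nat \<Rightarrow> nat \<Rightarrow> int) \<Rightarrow> (nat \<Rightarrow> nat \<Rightarrow> int)" where
  "zdivp p d k w = (THE v. v \<in> Zpd p d \<and> zsmul p (int p ^ k) v = w)"

record ('g, 'a) pmod =
  mcar :: "'a set"
  madd :: "'a \<Rightarrow> 'a \<Rightarrow> 'a"
  mzero :: 'a
  mneg :: "'a \<Rightarrow> 'a"
  mact :: "'a \<Rightarrow> 'g \<Rightarrow> 'a"

definition msub :: "('g, 'a) pmod \<Rightarrow> 'a \<Rightarrow> 'a \<Rightarrow> 'a" where
  "msub A x y = madd A x (mneg A y)"

definition Tmod :: "nat \<Rightarrow> nat \<Rightarrow> ((nat \<Rightarrow> nat \<Rightarrow> int) \<Rightarrow> 'g \<Rightarrow> (nat \<Rightarrow> nat \<Rightarrow> int))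
    \<Rightarrow> ('g, nat \<Rightarrow> nat \<Rightarrow> int) pmod" where
  "Tmod p d act = \<lparr>mcar = Zpd p d, madd = zadd p, mzero = (\<lambda>i n. 0), mneg = zneg p, mact = act\<rparr>"

text \<open>Projection T \<rightarrow> T / p^k T; an element of T/p^k T is stored as its vector of residues mod p^k.\<close>
definition trunc :: "nat \<Rightarrow> (nat \<Rightarrow> nat \<Rightarrow> int) \<Rightarrow> (nat \<Rightarrow> int)" where
  "trunc k v = (\<lambda>i. v i k)"

text \<open>Canonical lift T/p^k T \<rightarrow> T (a set-theoretic section of the projection).\<close>
definition liftM :: "nat \<Rightarrow> (nat \<Rightarrow> int) \<Rightarrow> (nat \<Rightarrow> nat \<Rightarrow> int)" where
  "liftM p a = (\<lambda>i n. a i mod (int p ^ n))"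

definition Mmod :: "nat \<Rightarrow> nat \<Rightarrow> nat \<Rightarrow> ((nat \<Rightarrow> nat \<Rightarrow> int) \<Rightarrow> 'g \<Rightarrow> (nat \<Rightarrow> nat \<Rightarrow> int))
    \<Rightarrow> ('g, nat \<Rightarrow> int) pmod" where
  "Mmod p d k act = \<lparr>mcar = trunc k ` Zpd p d,
     madd = (\<lambda>a b i. (a i + b i) mod (int p ^ k)),
     mzero = (\<lambda>i. 0),
     mneg = (\<lambda>a i. (- a i) mod (int p ^ k)),
     mact = (\<lambda>a g. trunc k (act (liftM p a) g))\<rparr>"

text \<open>The map mul : T/p^k T \<rightarrow> T/p^(k+1) T, t + p^k T \<mapsto> p t + p^(k+1) T.\<close>
definition mulM :: "nat \<Rightarrow> nat \<Rightarrow> (nat \<Rightarrow> int) \<Rightarrow> (nat \<Rightarrow> int)" where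
  "mulM p k a = trunc (Suc k) (zsmul p (int p) (liftM p a))"

section \<open>Normalised cochains, cocycles, coboundaries (inhomogeneous, right modules)\<close>

text \<open>Cochains on a subset H (a subgroup) of the group G, with values in A,
  normalised, and (by convention) zero outside H.\<close>

definition cochain1 :: "('g, 'b) monoid_scheme \<Rightarrow> 'g set \<Rightarrow> ('g, 'a) pmod \<Rightarrow> ('g \<Rightarrow> 'a) set" where
  "cochain1 G H A = {f. (\<forall>g\<in>H. f g \<in> mcar A) \<and> (\<forall>g. g \<notin> H \<longrightarrow> f g = mzero A)
      \<and> f \<one>\<^bsub>G\<^esub> = mzero A}"

definition cochain2 :: "('g, 'b) monoid_scheme \<Rightarrow> 'g set \<Rightarrow> ('g, 'a) pmod \<Rightarrow> ('g \<Rightarrow> 'g \<Rightarrow> 'a) set" where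
  "cochain2 G H A = {f. (\<forall>g\<in>H. \<forall>h\<in>H. f g h \<in> mcar A)
      \<and> (\<forall>g h. (g \<notin> H \<or> h \<notin> H) \<longrightarrow> f g h = mzero A)
      \<and> (\<forall>g. f \<one>\<^bsub>G\<^esub> g = mzero A \<and> f g \<one>\<^bsub>G\<^esub> = mzero A)}"

definition cochain3 :: "('g, 'b) monoid_scheme \<Rightarrow> 'g set \<Rightarrow> ('g, 'a) pmod \<Rightarrow> ('g \<Rightarrow> 'g \<Rightarrow> 'g \<Rightarrow> 'a) set" where
  "cochain3 G H A = {f. (\<forall>g\<in>H. \<forall>h\<in>H. \<forall>k\<in>H. f g h k \<in> mcar A)
      \<and> (\<forall>g h k. (g \<notin> H \<or> h \<notin> H \<or> k \<notin> H) \<longrightarrow> f g h k = mzero A)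
      \<and> (\<forall>g h. f \<one>\<^bsub>G\<^esub> g h = mzero A \<and> f g \<one>\<^bsub>G\<^esub> h = mzero A \<and> f g h \<one>\<^bsub>G\<^esub> = mzero A)}"

text \<open>Coboundary maps: (\<delta>f)(g1..g(n+1)) = f(g2..) + \<Sum>(-1)^i f(..,gi g(i+1),..) + (-1)^(n+1) f(g1..gn)^g(n+1).\<close>

definition cobd1 :: "('g, 'b) monoid_scheme \<Rightarrow> ('g, 'a) pmod \<Rightarrow> ('g \<Rightarrow> 'a) \<Rightarrow> 'g \<Rightarrow> 'g \<Rightarrow> 'a" where
  "cobd1 G A f g h = madd A (msub A (f h) (f (g \<otimes>\<^bsub>G\<^esub> h))) (mact A (f g) h)"

definition cobd2 :: "('g, 'b) monoid_scheme \<Rightarrow> ('g, 'a) pmod \<Rightarrow> ('g \<Rightarrow> 'g \<Rightarrow> 'a) \<Rightarrow> 'g \<Rightarrow> 'g \<Rightarrow> 'g \<Rightarrow> 'a" where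
  "cobd2 G A f g h k = msub A (madd A (msub A (f h k) (f (g \<otimes>\<^bsub>G\<^esub> h) k)) (f g (h \<otimes>\<^bsub>G\<^esub> k)))
                              (mact A (f g h) k)"

definition cobd3 :: "('g, 'b) monoid_scheme \<Rightarrow> ('g, 'a) pmod \<Rightarrow> ('g \<Rightarrow> 'g \<Rightarrow> 'g \<Rightarrow> 'a)
    \<Rightarrow> 'g \<Rightarrow> 'g \<Rightarrow> 'g \<Rightarrow> 'g \<Rightarrow> 'a" where
  "cobd3 G A f g h k l = madd A (msub A (madd A (msub A (f h k l) (f (g \<otimes>\<^bsub>G\<^esub> h) k l))
        (f g (h \<otimes>\<^bsub>G\<^esub> k) l)) (f g h (k \<otimes>\<^bsub>G\<^esub> l))) (mact A (f g h k) l)"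

definition Z1 :: "('g, 'b) monoid_scheme \<Rightarrow> 'g set \<Rightarrow> ('g, 'a) pmod \<Rightarrow> ('g \<Rightarrow> 'a) set" where
  "Z1 G H A = {f \<in> cochain1 G H A. \<forall>g\<in>H. \<forall>h\<in>H.
      f (g \<otimes>\<^bsub>G\<^esub> h) = madd A (mact A (f g) h) (f h)}"

definition Z2 :: "('g, 'b) monoid_scheme \<Rightarrow> 'g set \<Rightarrow> ('g, 'a) pmod \<Rightarrow> ('g \<Rightarrow> 'g \<Rightarrow> 'a) set" where
  "Z2 G H A = {f \<in> cochain2 G H A. \<forall>g\<in>H. \<forall>h\<in>H. \<forall>k\<in>H.
      madd A (mact A (f g h) k) (f (g \<otimes>\<^bsub>G\<^esub> h) k) = madd A (f h k) (f g (h \<otimes>\<^bsub>G\<^esub> k))}"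

definition B2 :: "('g, 'b) monoid_scheme \<Rightarrow> 'g set \<Rightarrow> ('g, 'a) pmod \<Rightarrow> ('g \<Rightarrow> 'g \<Rightarrow> 'a) set" where
  "B2 G H A = {f \<in> cochain2 G H A. \<exists>c\<in>cochain1 G H A. \<forall>g\<in>H. \<forall>h\<in>H. f g h = cobd1 G A c g h}"

definition Z3 :: "('g, 'b) monoid_scheme \<Rightarrow> 'g set \<Rightarrow> ('g, 'a) pmod \<Rightarrow> ('g \<Rightarrow> 'g \<Rightarrow> 'g \<Rightarrow> 'a) set" where
  "Z3 G H A = {f \<in> cochain3 G H A. \<forall>g\<in>H. \<forall>h\<in>H. \<forall>k\<in>H. \<forall>l\<in>H.
      cobd3 G A f g h k l = mzero A}"

definition B3 :: "('g, 'b) monoid_scheme \<Rightarrow> 'g set \<Rightarrow> ('g, 'a) pmod \<Rightarrow> ('g \<Rightarrow> 'g \<Rightarrow> 'g \<Rightarrow> 'a) set" where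
  "B3 G H A = {f \<in> cochain3 G H A. \<exists>c\<in>cochain2 G H A. \<forall>g\<in>H. \<forall>h\<in>H. \<forall>k\<in>H.
      f g h k = cobd2 G A c g h k}"

definition res2 :: "'g set \<Rightarrow> ('g, 'a) pmod \<Rightarrow> ('g \<Rightarrow> 'g \<Rightarrow> 'a) \<Rightarrow> ('g \<Rightarrow> 'g \<Rightarrow> 'a)" where
  "res2 L A f = (\<lambda>g h. if g \<in> L \<and> h \<in> L then f g h else mzero A)"

definition res3 :: "'g set \<Rightarrow> ('g, 'a) pmod \<Rightarrow> ('g \<Rightarrow> 'g \<Rightarrow> 'g \<Rightarrow> 'a) \<Rightarrow> ('g \<Rightarrow> 'g \<Rightarrow> 'g \<Rightarrow> 'a)" where
  "res3 L A f = (\<lambda>g h k. if g \<in> L \<and> h \<in> L \<and> k \<in> L then f g h k else mzero A)"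

definition ext_group :: "('g, 'b) monoid_scheme \<Rightarrow> ('g, 'a) pmod \<Rightarrow> ('g \<Rightarrow> 'g \<Rightarrow> 'a)
    \<Rightarrow> ('g \<times> 'a) monoid" where
  "ext_group G A tau = \<lparr>carrier = carrier G \<times> mcar A,
     monoid.mult = (\<lambda>(g, m) (h, n). (g \<otimes>\<^bsub>G\<^esub> h, madd A (madd A (mact A m h) n) (tau g h))),
     monoid.one = (\<one>\<^bsub>G\<^esub>, mzero A)\<rparr>"

definition elem_ab :: "nat \<Rightarrow> ('a, 'b) monoid_scheme \<Rightarrow> 'a set \<Rightarrow> bool" where
  "elem_ab p G E \<longleftrightarrow> subgroup E G \<and> (\<forall>x\<in>E. \<forall>y\<in>E. x \<otimes>\<^bsub>G\<^esub> y = y \<otimes>\<^bsub>G\<^esub> x)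
      \<and> (\<forall>x\<in>E. x [^]\<^bsub>G\<^esub> p = \<one>\<^bsub>G\<^esub>)"

definition gcomm :: "('a, 'b) monoid_scheme \<Rightarrow> 'a \<Rightarrow> 'a \<Rightarrow> 'a" where
  "gcomm G a b = inv\<^bsub>G\<^esub> a \<otimes>\<^bsub>G\<^esub> inv\<^bsub>G\<^esub> b \<otimes>\<^bsub>G\<^esub> a \<otimes>\<^bsub>G\<^esub> b"

text \<open>Closure in the pro-p topology of S = Ext(rho) = P x T: the subgroups
  {1} x p^n T form a base of open neighbourhoods of the identity.\<close>
definition sclosure :: "nat \<Rightarrow> nat \<Rightarrow> ('g, 'b) monoid_scheme \<Rightarrow> ('g \<times> (nat \<Rightarrow> nat \<Rightarrow> int)) monoid
    \<Rightarrow> ('g \<times> (nat \<Rightarrow> nat \<Rightarrow> int)) set \<Rightarrow> ('g \<times> (nat \<Rightarrow> nat \<Rightarrow> int)) set" where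
  "sclosure p d P S H = (\<Inter>n. H <#>\<^bsub>S\<^esub> {(\<one>\<^bsub>P\<^esub>, zsmul p (int p ^ n) t) | t. t \<in> Zpd p d})"

primrec cser :: "('a set \<Rightarrow> 'a set) \<Rightarrow> ('a, 'b) monoid_scheme \<Rightarrow> 'a set \<Rightarrow> nat \<Rightarrow> 'a set" where
  "cser cl S A 0 = A"
| "cser cl S A (Suc i) = cl (generate S {gcomm S a b | a b. a \<in> cser cl S A i \<and> b \<in> carrier S})"


text \<open>S = Ext(rho), with T identified with {(1,t)}.\<close>
definition Sgrp :: "'g monoid \<Rightarrow> nat \<Rightarrow> nat \<Rightarrow> ((nat \<Rightarrow> nat \<Rightarrow> int) \<Rightarrow> 'g \<Rightarrow> (nat \<Rightarrow> nat \<Rightarrow> int))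
    \<Rightarrow> ('g \<Rightarrow> 'g \<Rightarrow> (nat \<Rightarrow> nat \<Rightarrow> int)) \<Rightarrow> ('g \<times> (nat \<Rightarrow> nat \<Rightarrow> int)) monoid" where
  "Sgrp P p d act rho = ext_group P (Tmod p d act) rho"

definition Tsub :: "'g monoid \<Rightarrow> nat \<Rightarrow> nat \<Rightarrow> ('g \<times> (nat \<Rightarrow> nat \<Rightarrow> int)) set" where
  "Tsub P p d = {\<one>\<^bsub>P\<^esub>} \<times> Zpd p d"

text \<open>Lower central series of S: lcs i = gamma_(i+1)(S) (closed commutator subgroups).\<close>
definition lcsS where
  "lcsS P p d act rho = cser (sclosure p d P (Sgrp P p d act rho)) (Sgrp P p d act rho)
       (carrier (Sgrp P p d act rho))"

definition Tser where
  "Tser P p d act rho = cser (sclosure p d P (Sgrp P p d act rho)) (Sgrp P p d act rho) (Tsub P p d)"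

text \<open>M_y = T / p^(y+e) T with e = 3m.\<close>
definition Mx :: "nat \<Rightarrow> nat \<Rightarrow> nat \<Rightarrow> ((nat \<Rightarrow> nat \<Rightarrow> int) \<Rightarrow> 'g \<Rightarrow> (nat \<Rightarrow> nat \<Rightarrow> int)) \<Rightarrow> nat
    \<Rightarrow> ('g, nat \<Rightarrow> int) pmod" where
  "Mx p d m act y = Mmod p d (y + 3 * m) act"

definition Ic where
  "Ic P p d m act y = (\<lambda>\<sigma> g h. trunc (y + 3 * m) (\<sigma> g h)) ` Z2 P (carrier P) (Tmod p d act)"

text \<open>J^2(P,M_y): image of Z^2(P, p^(y+e-m)T / p^(y+e)T) under inclusion.\<close>
definition Jc where
  "Jc P p d m act y = {\<sigma> \<in> Z2 P (carrier P) (Mx p d m act y). \<forall>g h. \<sigma> g h \<in>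
       trunc (y + 3 * m) ` {zsmul p (int p ^ (y + 3 * m - m)) t | t. t \<in> Zpd p d}}"

definition Cadd :: "('g, 'a) pmod \<Rightarrow> ('g \<Rightarrow> 'g \<Rightarrow> 'a) \<Rightarrow> ('g \<Rightarrow> 'g \<Rightarrow> 'a) \<Rightarrow> ('g \<Rightarrow> 'g \<Rightarrow> 'a)" where
  "Cadd A \<sigma> \<tau> = (\<lambda>g h. madd A (\<sigma> g h) (\<tau> g h))"

text \<open>The composite Z^2(P,M_y) \<rightarrow> H^2(P,M_y) \<rightarrow> H^3(P,p^(y+e)T) \<rightarrow> H^3(P,T) on cocycle level:
  lift, apply the coboundary, divide by p^(y+e).\<close>
definition conn where
  "conn P p d m act y \<sigma> = (\<lambda>g h k. if g \<in> carrier P \<and> h \<in> carrier P \<and> k \<in> carrier P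
      then zdivp p d (y + 3 * m) (cobd2 P (Tmod p d act) (\<lambda>a b. liftM p (\<sigma> a b)) g h k)
      else (\<lambda>i n. 0))"

definition Lcal where
  "Lcal P p d act rho = {L. elem_ab p P L \<and> res2 L (Tmod p d act) rho \<in> B2 P L (Tmod p d act)}"

definition Leta where
  "Leta P p d act rho eta = {L \<in> Lcal P p d act rho.
      res3 L (Tmod p d act) eta \<in> B3 P L (Tmod p d act)}"

definition Gx where
  "Gx P p d m act rho etax x = ext_group P (Mx p d m act x)
      (\<lambda>g h. madd (Mx p d m act x) (trunc (x + 3 * m) (rho g h)) (etax g h))"

definition Ox where
  "Ox P p d m act rho etax x L = {Q. Q \<subseteq> {\<one>\<^bsub>P\<^esub>} \<times> mcar (Mx p d m act x)
      \<and> elem_ab p (Gx P p d m act rho etax x) Q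
      \<and> (\<forall>l\<in>L. \<forall>u. (\<one>\<^bsub>P\<^esub>, u) \<in> Q \<longrightarrow> mact (Mx p d m act x) u l = u)}"

definition CL where
  "CL p d m act x t \<gamma> L = {(l, madd (Mx p d m act x) (t l) (\<gamma> l)) | l. l \<in> L}"

definition Cx where
  "Cx P p d m act rho etax x t L = {CL p d m act x t \<gamma> L <#>\<^bsub>Gx P p d m act rho etax x\<^esub> Q | \<gamma> Q.
      \<gamma> \<in> Z1 P L (Mx p d m act x) \<and> Q \<in> Ox P p d m act rho etax x L}"

end

theory Submission imports Defs begin

(* Let E be an elementary abelian subgroup of G_x and L its image in P. The intersection of E
   with M_x has a complement in E, which is the graph of a map c : L -> M_x; that this graph is
   a subgroup says that rho_x + eta_x restricted to L is the coboundary of -c. Moreover L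
   centralises E \<inter> M_x.
   Lift c to T. The defect rho + eta_x~ + \<delta>c~ vanishes modulo p^(x+e), and its quotient w by
   p^(x+e) has coboundary the connecting image of eta_x on L, so eta restricts to a coboundary.
   Since eta_x lies in J, also rho + \<delta>c~ is divisible by p^(x+e-m); the quotient u is a
   2-cocycle on L, and averaging u over L shows that |L| u is a coboundary. As |L| divides p^m and
   x + e - m \<ge> m, rho restricts to a coboundary as well. Hence L \<in> \<L>_eta and
   E = C_{L,x}(c - t_{L,x}) (E \<inter> M_x).
   Conversely, the graph of a twisted cocycle on an elementary abelian L is elementary abelian
   and commutes with every subgroup of M_x centralised by L. The sets \<C>_x(L) are disjoint
   because each of their members projects onto L. *)

section \<open>p-adic vectors\<close>

lemma zp_restrict:
  assumes "a \<in> zp p" shows "a (n + j) mod int p ^ n = a n"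
proof (induction j)
  case 0 then show ?case using assms unfolding zp_def by simp
next
  case (Suc j)
  have "a (n + Suc j) mod int p ^ n = (a (Suc (n + j)) mod int p ^ (n + j)) mod int p ^ n"
    by (simp add: mod_mod_cancel le_imp_power_dvd)
  also have "\<dots> = a (n + j) mod int p ^ n" using assms unfolding zp_def by simp
  finally show ?case using Suc by simp
qed

lemma zp_bounds: "a \<in> zp p \<Longrightarrow> 0 \<le> a n \<and> a n < int p ^ n"
  unfolding zp_def by simp

lemma zp_mod_self: "a \<in> zp p \<Longrightarrow> a n mod int p ^ n = a n"
  using zp_bounds[of a p n] by simp

lemma zp_of_compatible:
  assumes p: "p > 0" and c: "\<And>n. f (Suc n) mod int p ^ n = f n mod int p ^ n"
  shows "(\<lambda>n. f n mod int p ^ n) \<in> zp p"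
  unfolding zp_def
proof (intro CollectI allI conjI)
  fix n
  show "0 \<le> f n mod int p ^ n" using p by simp
  show "f n mod int p ^ n < int p ^ n" using p by simp
  show "f (Suc n) mod int p ^ Suc n mod int p ^ n = f n mod int p ^ n"
    using c[of n] by (simp add: mod_mod_cancel le_imp_power_dvd)
qed

lemma zp_of_int: "p > 0 \<Longrightarrow> (\<lambda>n. c mod int p ^ n) \<in> zp p"
  using zp_of_compatible[of p "\<lambda>n. c"] by simp

lemma Zpd_of_compatible:
  assumes p: "p > 0" and c: "\<And>i n. i < d \<Longrightarrow> f i (Suc n) mod int p ^ n = f i n mod int p ^ n"
    and z: "\<And>i n. d \<le> i \<Longrightarrow> f i n mod int p ^ n = 0"
  shows "(\<lambda>i n. f i n mod int p ^ n) \<in> Zpd p d"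
  unfolding Zpd_def
proof (intro CollectI conjI allI impI)
  fix i assume "i < d"
  show "(\<lambda>n. f i n mod int p ^ n) \<in> zp p" by (rule zp_of_compatible[OF p c[OF \<open>i < d\<close>]])
next
  fix i assume "d \<le> i"
  then show "(\<lambda>n. f i n mod int p ^ n) = (\<lambda>n. 0)" using z by auto
qed

lemma Zpd_coord: "v \<in> Zpd p d \<Longrightarrow> i < d \<Longrightarrow> v i \<in> zp p"
  unfolding Zpd_def by auto

lemma Zpd_coord_high: "v \<in> Zpd p d \<Longrightarrow> d \<le> i \<Longrightarrow> v i n = 0"
  unfolding Zpd_def by auto

lemma Zpd_mod_self: "v \<in> Zpd p d \<Longrightarrow> v i n mod int p ^ n = v i n"
  by (cases "i < d") (auto simp: zp_mod_self Zpd_coord Zpd_coord_high)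

lemma Zpd_compatible: "v \<in> Zpd p d \<Longrightarrow> v i (Suc n) mod int p ^ n = v i n"
  by (cases "i < d") (use Zpd_coord in \<open>auto simp: Zpd_coord_high zp_def\<close>)

lemma Zpd_compatible_mod: "v \<in> Zpd p d \<Longrightarrow> v i (Suc n) mod int p ^ n = v i n mod int p ^ n"
  by (simp add: Zpd_compatible Zpd_mod_self)

lemma Zpd_restrict: "v \<in> Zpd p d \<Longrightarrow> v i (n + j) mod int p ^ n = v i n"
  by (cases "i < d") (auto simp: Zpd_coord Zpd_coord_high zp_restrict)

lemma Zpd_bounds: "p > 0 \<Longrightarrow> v \<in> Zpd p d \<Longrightarrow> 0 \<le> v i n \<and> v i n < int p ^ n"
  by (cases "i < d") (auto simp: Zpd_coord_high dest: Zpd_coord zp_bounds)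

lemma Zpd_eqI:
  assumes "v \<in> Zpd p d" "w \<in> Zpd p d" "\<And>i n. v i n mod int p ^ n = w i n mod int p ^ n"
  shows "v = w"
  using assms by (auto simp: Zpd_mod_self fun_eq_iff)

lemma zadd_Zpd: "p > 0 \<Longrightarrow> v \<in> Zpd p d \<Longrightarrow> w \<in> Zpd p d \<Longrightarrow> zadd p v w \<in> Zpd p d"
  unfolding zadd_def
  by (rule Zpd_of_compatible) (auto simp: Zpd_coord_high intro!: mod_add_cong[OF Zpd_compatible_mod Zpd_compatible_mod])

lemma zneg_Zpd: "p > 0 \<Longrightarrow> v \<in> Zpd p d \<Longrightarrow> zneg p v \<in> Zpd p d"
  unfolding zneg_def
  by (rule Zpd_of_compatible) (auto simp: Zpd_coord_high intro!: mod_minus_cong[OF Zpd_compatible_mod])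

lemma zsmul_Zpd: "p > 0 \<Longrightarrow> v \<in> Zpd p d \<Longrightarrow> zsmul p c v \<in> Zpd p d"
  unfolding zsmul_def
  by (rule Zpd_of_compatible) (auto simp: Zpd_coord_high Zpd_compatible intro!: mod_mult_cong[OF refl Zpd_compatible_mod])

lemma zero_Zpd: "p > 0 \<Longrightarrow> (\<lambda>i n. 0) \<in> Zpd p d"
  unfolding Zpd_def zp_def by auto

lemma zpscal_of_int: "zpscal p (\<lambda>n. c mod int p ^ n) t = zsmul p c t"
  unfolding zpscal_def zsmul_def by (simp only: mod_mult_left_eq)

lemma zneg_zsmul: "zneg p t = zsmul p (-1) t"
  unfolding zneg_def zsmul_def by simp

lemma zsmul_zero_left: "zsmul p 0 t = (\<lambda>i n. 0)"
  unfolding zsmul_def by simp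

lemma z_apply: "zadd p v w i n = (v i n + w i n) mod int p ^ n" "zneg p v i n = (- v i n) mod int p ^ n"
  "zsmul p c v i n = (c * v i n) mod int p ^ n"
  by (simp_all add: zadd_def zneg_def zsmul_def)

lemmas mod_norm = mod_simps mod_mod_trivial

(* To derive x = y modulo Q from congruences a_i = b_i modulo Q, exhibit x - y as an integer
   combination of the a_i - b_i; what remains is a ring identity. *)
lemma mod_eq_by_comb1: "(a1::int) mod Q = b1 mod Q \<Longrightarrow> x - y = c1 * (a1 - b1) \<Longrightarrow> x mod Q = y mod Q"
  by (metis (no_types, opaque_lifting) dvd_mult mod_eq_dvd_iff)

lemma mod_eq_by_comb2: "(a1::int) mod Q = b1 mod Q \<Longrightarrow> a2 mod Q = b2 mod Q \<Longrightarrow>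
   x - y = c1 * (a1 - b1) + c2 * (a2 - b2) \<Longrightarrow> x mod Q = y mod Q"
  by (simp add: mod_eq_dvd_iff dvd_add dvd_mult)

lemma mod_eq_by_comb5: "(a1::int) mod Q = b1 mod Q \<Longrightarrow> a2 mod Q = b2 mod Q \<Longrightarrow> a3 mod Q = b3 mod Q \<Longrightarrow>
   a4 mod Q = b4 mod Q \<Longrightarrow> a5 mod Q = b5 mod Q \<Longrightarrow>
   x - y = c1 * (a1 - b1) + c2 * (a2 - b2) + c3 * (a3 - b3) + c4 * (a4 - b4) + c5 * (a5 - b5) \<Longrightarrow>
   x mod Q = y mod Q"
  by (simp add: mod_eq_dvd_iff dvd_add dvd_mult)

lemma mod_add_right_cong: "(x::int) mod Q = y mod Q \<Longrightarrow> (x + r) mod Q = (y + r) mod Q"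
  by (rule mod_add_cong) auto

lemma ext_assoc_mod: "((T1::int) + T2) mod Q = (T3 + T4) mod Q \<Longrightarrow>
  ((((A + B) mod Q + T1) mod Q + C) mod Q + T2) mod Q = ((A + ((B + C) mod Q + T3) mod Q) mod Q + T4) mod Q"
proof -
  assume h: "(T1 + T2) mod Q = (T3 + T4) mod Q"
  have "((((A + B) mod Q + T1) mod Q + C) mod Q + T2) mod Q = ((T1 + T2) + (A + B + C)) mod Q"
    by (simp add: mod_simps ac_simps)
  also have "\<dots> = ((T3 + T4) + (A + B + C)) mod Q" using h by (rule mod_add_right_cong)
  also have "\<dots> = ((A + ((B + C) mod Q + T3) mod Q) mod Q + T4) mod Q"
    by (simp add: mod_simps ac_simps)
  finally show ?thesis .
qed

lemma zsmul_pow_cancel: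
  assumes p: "p > 0" and v: "v \<in> Zpd p d" and w: "w \<in> Zpd p d"
    and eq: "zsmul p (int p ^ j) v = zsmul p (int p ^ j) w"
  shows "v = w"
proof (rule Zpd_eqI[OF v w])
  fix i n
  have "(int p ^ j * v i (n + j)) mod int p ^ (n + j) = (int p ^ j * w i (n + j)) mod int p ^ (n + j)"
    using fun_cong[OF fun_cong[OF eq, of i], of "n + j"] by (simp add: zsmul_def)
  then have "int p ^ (n + j) dvd int p ^ j * (v i (n + j) - w i (n + j))"
    by (simp add: mod_eq_dvd_iff algebra_simps)
  then have "int p ^ j * int p ^ n dvd int p ^ j * (v i (n + j) - w i (n + j))"
    by (simp add: power_add mult.commute)
  then have "int p ^ n dvd (v i (n + j) - w i (n + j))"
    using p by (subst (asm) dvd_mult_cancel_left) auto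
  then have "v i (n + j) mod int p ^ n = w i (n + j) mod int p ^ n"
    by (simp add: mod_eq_dvd_iff)
  then show "v i n mod int p ^ n = w i n mod int p ^ n"
    using Zpd_restrict[OF v, of i n j] Zpd_restrict[OF w, of i n j] by simp
qed

lemma zdivp_eq:
  assumes p: "p > 0" and v: "v \<in> Zpd p d" and w: "zsmul p (int p ^ j) v = w"
  shows "zdivp p d j w = v"
  unfolding zdivp_def
  using v w zsmul_pow_cancel[OF p] by (intro the_equality) auto

definition zquot :: "nat \<Rightarrow> nat \<Rightarrow> (nat \<Rightarrow> nat \<Rightarrow> int) \<Rightarrow> (nat \<Rightarrow> nat \<Rightarrow> int)" where
  "zquot p k v = (\<lambda>i n. v i (n + k) div int p ^ k)"

lemma Zpd_div_pow:
  assumes p: "p > 0" and v: "v \<in> Zpd p d" and z: "\<And>i. v i k = 0"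
  shows "zquot p k v \<in> Zpd p d" and "v = zsmul p (int p ^ k) (zquot p k v)"
proof -
  define s where "s = zquot p k v"
  have pk: "int p ^ k > 0" using p by simp
  have dv: "v i (n + k) = int p ^ k * s i n" for i n
    using Zpd_restrict[OF v, of i k n] z[of i] unfolding s_def zquot_def
    by (simp add: add.commute dvd_eq_mod_eq_0)
  have range: "0 \<le> s i n \<and> s i n < int p ^ n" for i n
    using Zpd_bounds[OF p v, of i "n + k"] dv[of i n] pk
    by (auto simp: power_add zero_le_mult_iff mult.commute[of "int p ^ n"])
  show sZ: "s \<in> Zpd p d"
    unfolding Zpd_def zp_def
  proof (intro CollectI conjI allI impI)
    fix i n assume "i < d"
    show "0 \<le> s i n" "s i n < int p ^ n" using range by auto
    have "int p ^ (n + k) dvd v i (Suc n + k) - v i (n + k)"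
      using Zpd_compatible_mod[OF v, of i "n + k"] by (simp add: mod_eq_dvd_iff)
    moreover have "v i (Suc n + k) - v i (n + k) = int p ^ k * (s i (Suc n) - s i n)"
      by (simp only: dv right_diff_distrib)
    ultimately have "int p ^ k * int p ^ n dvd int p ^ k * (s i (Suc n) - s i n)"
      by (simp add: power_add mult.commute)
    then have "s i (Suc n) mod int p ^ n = s i n mod int p ^ n"
      using p by (simp add: mod_eq_dvd_iff)
    then show "s i (Suc n) mod int p ^ n = s i n" using range[of i n] by simp
  next
    fix i assume "d \<le> i"
    then show "s i = (\<lambda>n. 0)" unfolding s_def zquot_def using Zpd_coord_high[OF v] by auto
  qed
  show "v = zsmul p (int p ^ k) s"
  proof (rule Zpd_eqI[OF v zsmul_Zpd[OF p sZ]])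
    fix i n
    have "v i n = v i (n + k) mod int p ^ n" using Zpd_restrict[OF v, of i n k] by simp
    then show "v i n mod int p ^ n = zsmul p (int p ^ k) s i n mod int p ^ n"
      unfolding zsmul_def dv by simp
  qed
qed

section \<open>Elementary abelian subgroups\<close>

lemma subgroup_nat_pow_closed: "subgroup H G \<Longrightarrow> h \<in> H \<Longrightarrow> h [^]\<^bsub>G\<^esub> (n::nat) \<in> H"
  by (induction n) (auto intro: subgroup.one_closed subgroup.m_closed)

lemma (in group) interchange_commuting:
  assumes "a \<in> carrier G" "b \<in> carrier G" "a' \<in> carrier G" "b' \<in> carrier G"
    and "b \<otimes> a' = a' \<otimes> b"
  shows "(a \<otimes> b) \<otimes> (a' \<otimes> b') = (a \<otimes> a') \<otimes> (b \<otimes> b')"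
proof -
  have "(a \<otimes> b) \<otimes> (a' \<otimes> b') = a \<otimes> (b \<otimes> a') \<otimes> b'" using assms(1-4) by (simp add: m_assoc)
  also have "\<dots> = a \<otimes> (a' \<otimes> b) \<otimes> b'" using assms(5) by simp
  also have "\<dots> = (a \<otimes> a') \<otimes> (b \<otimes> b')" using assms(1-4) by (simp add: m_assoc)
  finally show ?thesis .
qed

lemma (in group) commuting_set_mult_subgroup:
  assumes sA: "subgroup A G" and sB: "subgroup B G"
    and AB: "\<And>a b. a \<in> A \<Longrightarrow> b \<in> B \<Longrightarrow> a \<otimes> b = b \<otimes> a"
  shows "subgroup (A <#> B) G"
proof (rule subgroupI)
  have AG: "\<And>a. a \<in> A \<Longrightarrow> a \<in> carrier G" using subgroup.subset[OF sA] by blast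
  have BG: "\<And>a. a \<in> B \<Longrightarrow> a \<in> carrier G" using subgroup.subset[OF sB] by blast
  have mem: "x \<in> A <#> B \<longleftrightarrow> (\<exists>a\<in>A. \<exists>b\<in>B. x = a \<otimes> b)" for x
    unfolding set_mult_def by blast
  have swap: "(a \<otimes> b) \<otimes> (a' \<otimes> b') = (a \<otimes> a') \<otimes> (b \<otimes> b')"
    if "a \<in> A" "b \<in> B" "a' \<in> A" "b' \<in> B" for a b a' b'
    using that AG BG AB[of a' b] by (intro interchange_commuting) auto
  show "A <#> B \<subseteq> carrier G" using AG BG mem by auto
  show "A <#> B \<noteq> {}" using mem subgroup.one_closed[OF sA] subgroup.one_closed[OF sB] by blast
  show "x \<otimes> y \<in> A <#> B" if "x \<in> A <#> B" "y \<in> A <#> B" for x y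
    using that swap subgroup.m_closed[OF sA] subgroup.m_closed[OF sB] mem by metis
  show "inv x \<in> A <#> B" if hx: "x \<in> A <#> B" for x
  proof -
    obtain a b where ab: "a \<in> A" "b \<in> B" "x = a \<otimes> b" using hx mem by blast
    have "inv x = inv b \<otimes> inv a" using ab AG BG by (simp add: inv_mult_group)
    also have "\<dots> = inv a \<otimes> inv b"
      using AB[OF subgroup.m_inv_closed[OF sA ab(1)] subgroup.m_inv_closed[OF sB ab(2)]] by simp
    finally show ?thesis using mem subgroup.m_inv_closed[OF sA ab(1)] subgroup.m_inv_closed[OF sB ab(2)] by blast
  qed
qed

lemma (in group) elem_ab_set_mult:
  assumes A: "elem_ab p G A" and B: "elem_ab p G B"
    and AB: "\<And>a b. a \<in> A \<Longrightarrow> b \<in> B \<Longrightarrow> a \<otimes> b = b \<otimes> a"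
  shows "elem_ab p G (A <#> B)"
proof -
  have sA: "subgroup A G" and cA: "\<And>x y. x \<in> A \<Longrightarrow> y \<in> A \<Longrightarrow> x \<otimes> y = y \<otimes> x"
    and eA: "\<And>x. x \<in> A \<Longrightarrow> x [^] p = \<one>"
    using A unfolding elem_ab_def by auto
  have sB: "subgroup B G" and cB: "\<And>x y. x \<in> B \<Longrightarrow> y \<in> B \<Longrightarrow> x \<otimes> y = y \<otimes> x"
    and eB: "\<And>x. x \<in> B \<Longrightarrow> x [^] p = \<one>"
    using B unfolding elem_ab_def by auto
  have AG: "\<And>a. a \<in> A \<Longrightarrow> a \<in> carrier G" using subgroup.subset[OF sA] by blast
  have BG: "\<And>a. a \<in> B \<Longrightarrow> a \<in> carrier G" using subgroup.subset[OF sB] by blast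
  have mem: "x \<in> A <#> B \<longleftrightarrow> (\<exists>a\<in>A. \<exists>b\<in>B. x = a \<otimes> b)" for x
    unfolding set_mult_def by blast
  have "\<forall>x\<in>A <#> B. \<forall>y\<in>A <#> B. x \<otimes> y = y \<otimes> x"
  proof (intro ballI)
    fix x y assume "x \<in> A <#> B" "y \<in> A <#> B"
    then obtain a b a' b' where ab: "a \<in> A" "b \<in> B" "x = a \<otimes> b" "a' \<in> A" "b' \<in> B" "y = a' \<otimes> b'"
      using mem by metis
    have "x \<otimes> y = (a \<otimes> a') \<otimes> (b \<otimes> b')"
      using ab AG BG AB[of a' b] by (simp add: interchange_commuting)
    also have "\<dots> = (a' \<otimes> a) \<otimes> (b' \<otimes> b)" using cA cB ab by simp
    also have "\<dots> = y \<otimes> x"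
      using ab AG BG AB[of a b'] by (simp add: interchange_commuting)
    finally show "x \<otimes> y = y \<otimes> x" .
  qed
  moreover have "\<forall>x\<in>A <#> B. x [^] p = \<one>"
  proof
    fix x assume "x \<in> A <#> B"
    then obtain a b where ab: "a \<in> A" "b \<in> B" "x = a \<otimes> b" using mem by blast
    have "x [^] p = a [^] p \<otimes> b [^] p"
      using ab pow_mult_distrib[OF AB[OF ab(1,2)] AG[OF ab(1)] BG[OF ab(2)]] by simp
    then show "x [^] p = \<one>" using eA eB ab by simp
  qed
  ultimately show ?thesis
    unfolding elem_ab_def using commuting_set_mult_subgroup[OF sA sB AB] by blast
qed

lemma (in group) nat_pow_dvd_eq_one:
  "e \<in> carrier G \<Longrightarrow> e [^] p = \<one> \<Longrightarrow> p dvd i \<Longrightarrow> e [^] (i::nat) = \<one>"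
  by (auto simp: nat_pow_pow[symmetric])

lemma (in group) inv_nat_pow_order_p:
  assumes p: "0 < p" and e: "e \<in> carrier G" "e [^] p = \<one>"
  shows "inv (e [^] (i::nat)) = e [^] (i * (p - 1))"
proof (rule inv_equality)
  have "e [^] (i * (p - 1)) \<otimes> e [^] i = e [^] (i * (p - 1) + i)"
    using e by (simp add: nat_pow_mult)
  also have "i * (p - 1) + i = p * i" using p by (cases p) (auto simp: algebra_simps)
  finally show "e [^] (i * (p - 1)) \<otimes> e [^] i = \<one>"
    using nat_pow_dvd_eq_one[OF e, of "p * i"] by simp
qed (use e in auto)

lemma (in group) subgroup_join_cyclic:
  assumes p: "0 < p" and E: "elem_ab p G E" and sC: "subgroup C G" and CE: "C \<subseteq> E" and e: "e \<in> E"
  shows "subgroup {c \<otimes> e [^] (i::nat) | c i. c \<in> C} G" (is "subgroup ?C' G")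
proof -
  have sE: "subgroup E G" and cE: "\<And>x y. x \<in> E \<Longrightarrow> y \<in> E \<Longrightarrow> x \<otimes> y = y \<otimes> x"
    and eE: "\<And>x. x \<in> E \<Longrightarrow> x [^] p = \<one>"
    using E unfolding elem_ab_def by auto
  have EG: "E \<subseteq> carrier G" using sE by (rule subgroup.subset)
  have eG: "e \<in> carrier G" using e EG by blast
  have cG: "c \<in> carrier G" if "c \<in> C" for c using that CE EG by blast
  have epowE: "e [^] (i::nat) \<in> E" for i using subgroup_nat_pow_closed[OF sE e] .
  show ?thesis
  proof (rule subgroupI)
    show "?C' \<subseteq> carrier G" using cG eG by auto
    show "?C' \<noteq> {}" using subgroup.one_closed[OF sC] by blast
    show "a \<otimes> b \<in> ?C'" if ha: "a \<in> ?C'" "b \<in> ?C'" for a b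
    proof -
      obtain c i where a: "a = c \<otimes> e [^] (i::nat)" "c \<in> C" using ha(1) by blast
      obtain c' j where b: "b = c' \<otimes> e [^] (j::nat)" "c' \<in> C" using ha(2) by blast
      have "a \<otimes> b = c \<otimes> (e [^] i \<otimes> (c' \<otimes> e [^] j))"
        using a b cG eG by (simp add: m_assoc)
      also have "\<dots> = c \<otimes> ((c' \<otimes> e [^] j) \<otimes> e [^] i)"
      proof -
        have "c' \<otimes> e [^] j \<in> E" using b CE epowE subgroup.m_closed[OF sE] by blast
        then show ?thesis using cE[OF epowE[of i], of "c' \<otimes> e [^] j"] by simp
      qed
      also have "\<dots> = (c \<otimes> c') \<otimes> e [^] (j + i)"
        using a b cG eG by (simp add: m_assoc nat_pow_mult)
      finally show ?thesis using subgroup.m_closed[OF sC a(2) b(2)] by blast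
    qed
    show "inv a \<in> ?C'" if ha: "a \<in> ?C'" for a
    proof -
      obtain c i where a: "a = c \<otimes> e [^] (i::nat)" "c \<in> C" using ha by blast
      have ie: "inv (e [^] i) = e [^] (i * (p - 1))" by (rule inv_nat_pow_order_p[OF p eG eE[OF e]])
      have "inv a = inv (e [^] i) \<otimes> inv c"
        using a cG eG by (simp add: inv_mult_group)
      also have "\<dots> = inv c \<otimes> e [^] (i * (p - 1))"
        unfolding ie using cE[OF epowE subgroup.m_inv_closed[OF sE]] a CE by blast
      finally show ?thesis using subgroup.m_inv_closed[OF sC a(2)] by blast
    qed
  qed
qed

section \<open>The module T, its quotients M k = T / p^k T, and extensions\<close>

lemma Z2_D:
  assumes "\<tau> \<in> Z2 P (carrier P) A"
  shows "\<And>g h. g \<in> carrier P \<Longrightarrow> h \<in> carrier P \<Longrightarrow> \<tau> g h \<in> mcar A"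
    and "\<And>g. \<tau> \<one>\<^bsub>P\<^esub> g = mzero A" and "\<And>g. \<tau> g \<one>\<^bsub>P\<^esub> = mzero A"
    and "\<And>g h l. g \<in> carrier P \<Longrightarrow> h \<in> carrier P \<Longrightarrow> l \<in> carrier P \<Longrightarrow>
      madd A (mact A (\<tau> g h) l) (\<tau> (g \<otimes>\<^bsub>P\<^esub> h) l) = madd A (\<tau> h l) (\<tau> g (h \<otimes>\<^bsub>P\<^esub> l))"
  using assms unfolding Z2_def cochain2_def by auto

lemma ext_carrier: "carrier (ext_group P A \<tau>) = carrier P \<times> mcar A"
  by (simp add: ext_group_def)

lemma ext_mult: "(g, a) \<otimes>\<^bsub>ext_group P A \<tau>\<^esub> (h, b) = (g \<otimes>\<^bsub>P\<^esub> h, madd A (madd A (mact A a h) b) (\<tau> g h))"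
  by (simp add: ext_group_def)

lemma ext_one: "\<one>\<^bsub>ext_group P A \<tau>\<^esub> = (\<one>\<^bsub>P\<^esub>, mzero A)"
  by (simp add: ext_group_def)

locale padic_module =
  fixes P :: "'g monoid" and p d :: nat
    and act :: "(nat \<Rightarrow> nat \<Rightarrow> int) \<Rightarrow> 'g \<Rightarrow> (nat \<Rightarrow> nat \<Rightarrow> int)"
  assumes p_pos: "p > 0"
    and P_group: "group P"
    and act_closed: "\<forall>t\<in>Zpd p d. \<forall>g\<in>carrier P. act t g \<in> Zpd p d"
    and act_one: "\<forall>t\<in>Zpd p d. act t \<one>\<^bsub>P\<^esub> = t"
    and act_mult: "\<forall>t\<in>Zpd p d. \<forall>g\<in>carrier P. \<forall>h\<in>carrier P.
                     act (act t g) h = act t (g \<otimes>\<^bsub>P\<^esub> h)"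
    and act_add: "\<forall>t\<in>Zpd p d. \<forall>s\<in>Zpd p d. \<forall>g\<in>carrier P.
                     act (zadd p t s) g = zadd p (act t g) (act s g)"
    and act_lin: "\<forall>a\<in>zp p. \<forall>t\<in>Zpd p d. \<forall>g\<in>carrier P.
                     act (zpscal p a t) g = zpscal p a (act t g)"
begin

lemma act_Zpd[simp]: "t \<in> Zpd p d \<Longrightarrow> g \<in> carrier P \<Longrightarrow> act t g \<in> Zpd p d"
  using act_closed by blast

lemmas P_one[simp] = monoid.one_closed[OF group.is_monoid[OF P_group]]
  and P_mult[simp] = monoid.m_closed[OF group.is_monoid[OF P_group]]
  and P_assoc = monoid.m_assoc[OF group.is_monoid[OF P_group]]
  and P_lone[simp] = monoid.l_one[OF group.is_monoid[OF P_group]]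
  and P_rone[simp] = monoid.r_one[OF group.is_monoid[OF P_group]]
  and P_inv[simp] = group.inv_closed[OF P_group]
  and P_linv[simp] = group.l_inv[OF P_group]

lemmas Zpd_closed[simp] = zadd_Zpd[OF p_pos] zneg_Zpd[OF p_pos] zsmul_Zpd[OF p_pos] zero_Zpd[OF p_pos]

lemma act_zadd: "t \<in> Zpd p d \<Longrightarrow> s \<in> Zpd p d \<Longrightarrow> g \<in> carrier P \<Longrightarrow>
    act (zadd p t s) g = zadd p (act t g) (act s g)"
  using act_add by blast

lemma act_one_simp[simp]: "t \<in> Zpd p d \<Longrightarrow> act t \<one>\<^bsub>P\<^esub> = t"
  using act_one by blast

lemma act_act: "t \<in> Zpd p d \<Longrightarrow> g \<in> carrier P \<Longrightarrow> h \<in> carrier P \<Longrightarrow>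
    act (act t g) h = act t (g \<otimes>\<^bsub>P\<^esub> h)"
  using act_mult by blast

lemma act_zsmul: "t \<in> Zpd p d \<Longrightarrow> g \<in> carrier P \<Longrightarrow> act (zsmul p c t) g = zsmul p c (act t g)"
proof -
  assume a: "t \<in> Zpd p d" "g \<in> carrier P"
  have "act (zpscal p (\<lambda>n. c mod int p ^ n) t) g = zpscal p (\<lambda>n. c mod int p ^ n) (act t g)"
    using act_lin zp_of_int[OF p_pos, of c] a by blast
  then show ?thesis by (simp only: zpscal_of_int)
qed

lemma act_zneg: "t \<in> Zpd p d \<Longrightarrow> g \<in> carrier P \<Longrightarrow> act (zneg p t) g = zneg p (act t g)"
  by (simp add: zneg_zsmul act_zsmul)

lemma act_zero: "g \<in> carrier P \<Longrightarrow> act (\<lambda>i n. 0) g = (\<lambda>i n. 0)"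
  using act_zsmul[of "\<lambda>i n. 0" g 0] by (simp add: zsmul_zero_left)

(* The action on T descends to every quotient T / p^k T; this is what makes the action of
   Mmod, which is defined through the canonical lift, compatible with truncation. *)
lemma act_level:
  assumes t: "t \<in> Zpd p d" and t': "t' \<in> Zpd p d" and g: "g \<in> carrier P"
    and eq: "\<And>i. t i k = t' i k"
  shows "act t g i k = act t' g i k"
proof -
  define v where "v = zadd p t (zneg p t')"
  have vZ: "v \<in> Zpd p d" using t t' by (simp add: v_def)
  have "v i k = 0" for i
    unfolding v_def zadd_def zneg_def using eq[of i] by (simp add: mod_add_right_eq)
  then have s: "zquot p k v \<in> Zpd p d" "v = zsmul p (int p ^ k) (zquot p k v)"
    using Zpd_div_pow[OF p_pos vZ] by blast+
  have "t = zadd p t' v"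
  proof (rule Zpd_eqI[OF t])
    show "zadd p t' v \<in> Zpd p d" using t' vZ by simp
    fix i n show "t i n mod int p ^ n = zadd p t' v i n mod int p ^ n"
      unfolding v_def zadd_def zneg_def by (simp add: mod_simps)
  qed
  then have "t = zadd p t' (zsmul p (int p ^ k) (zquot p k v))" using s(2) by simp
  then have "act t g = zadd p (act t' g) (zsmul p (int p ^ k) (act (zquot p k v) g))"
    using s(1) t' g by (simp add: act_zadd act_zsmul)
  then show ?thesis
    using Zpd_mod_self[OF act_Zpd[OF t' g]] by (simp add: zadd_def zsmul_def)
qed

abbreviation "M k \<equiv> Mmod p d k act"

lemma mcar_Mmod: "mcar (Mmod p d k act) = trunc k ` Zpd p d"
  by (simp add: Mmod_def)

lemma liftM_Zpd: "(\<And>i. d \<le> i \<Longrightarrow> a i = 0) \<Longrightarrow> liftM p a \<in> Zpd p d"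
  unfolding liftM_def by (rule Zpd_of_compatible[OF p_pos]) auto

lemma mcar_M_iff: "a \<in> mcar (M k) \<longleftrightarrow> (\<forall>i. 0 \<le> a i \<and> a i < int p ^ k) \<and> (\<forall>i. d \<le> i \<longrightarrow> a i = 0)"
proof
  assume "a \<in> mcar (M k)"
  then obtain v where v: "v \<in> Zpd p d" "a = trunc k v" unfolding mcar_Mmod by blast
  show "(\<forall>i. 0 \<le> a i \<and> a i < int p ^ k) \<and> (\<forall>i. d \<le> i \<longrightarrow> a i = 0)"
    using Zpd_bounds[OF p_pos v(1)] Zpd_coord_high[OF v(1)] unfolding v(2) trunc_def by auto
next
  assume a: "(\<forall>i. 0 \<le> a i \<and> a i < int p ^ k) \<and> (\<forall>i. d \<le> i \<longrightarrow> a i = 0)"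
  then have "liftM p a \<in> Zpd p d" by (intro liftM_Zpd) auto
  moreover have "trunc k (liftM p a) = a" using a by (auto simp: trunc_def liftM_def fun_eq_iff)
  ultimately show "a \<in> mcar (M k)" unfolding mcar_Mmod by (metis image_eqI)
qed

lemma mcar_mod_self: "a \<in> mcar (M k) \<Longrightarrow> a i mod int p ^ k = a i"
  by (simp add: mcar_M_iff)

lemma M_eqI: "a \<in> mcar (M k) \<Longrightarrow> b \<in> mcar (M k) \<Longrightarrow> (\<And>i. a i mod int p ^ k = b i mod int p ^ k) \<Longrightarrow> a = b"
  by (auto simp: mcar_mod_self fun_eq_iff)

lemma liftM_in_Zpd[simp]: "a \<in> mcar (M k) \<Longrightarrow> liftM p a \<in> Zpd p d"
  by (rule liftM_Zpd) (simp add: mcar_M_iff)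

lemma trunc_in_M[simp]: "v \<in> Zpd p d \<Longrightarrow> trunc k v \<in> mcar (M k)"
  unfolding mcar_Mmod by (rule imageI)

lemma liftM_trunc_in_Zpd[simp]: "v \<in> Zpd p d \<Longrightarrow> liftM p (trunc k v) \<in> Zpd p d"
  using liftM_Zpd[of "trunc k v"] Zpd_coord_high[of v p d] by (auto simp: trunc_def)

lemma mact_trunc: "v \<in> Zpd p d \<Longrightarrow> g \<in> carrier P \<Longrightarrow> mact (M k) (trunc k v) g = trunc k (act v g)"
proof -
  assume v: "v \<in> Zpd p d" and g: "g \<in> carrier P"
  have "act (liftM p (trunc k v)) g i k = act v g i k" for i
    by (rule act_level[OF liftM_trunc_in_Zpd[OF v] v g]) (simp add: liftM_def trunc_def Zpd_mod_self[OF v])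
  then show ?thesis by (auto simp: Mmod_def trunc_def fun_eq_iff)
qed

lemma madd_trunc: "madd (M k) (trunc k v) (trunc k w) = trunc k (zadd p v w)"
  by (simp add: Mmod_def trunc_def zadd_def)
lemma mneg_trunc: "mneg (M k) (trunc k v) = trunc k (zneg p v)"
  by (simp add: Mmod_def trunc_def zneg_def)
lemma mzero_trunc: "mzero (M k) = trunc k (\<lambda>i n. 0)"
  by (simp add: Mmod_def trunc_def)

lemma mcar_M_trunc: "a \<in> mcar (M k) \<Longrightarrow> \<exists>v\<in>Zpd p d. a = trunc k v"
  unfolding mcar_Mmod by blast

lemma madd_apply: "madd (M k) a b i = (a i + b i) mod int p ^ k"
  by (simp add: Mmod_def)
lemma mneg_apply: "mneg (M k) a i = (- a i) mod int p ^ k"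
  by (simp add: Mmod_def)
lemma mzero_apply: "mzero (M k) i = 0"
  by (simp add: Mmod_def)

lemma madd_in_M[simp]: "a \<in> mcar (M k) \<Longrightarrow> b \<in> mcar (M k) \<Longrightarrow> madd (M k) a b \<in> mcar (M k)"
  using p_pos by (simp add: mcar_M_iff madd_apply)
lemma mneg_in_M[simp]: "a \<in> mcar (M k) \<Longrightarrow> mneg (M k) a \<in> mcar (M k)"
  using p_pos by (simp add: mcar_M_iff mneg_apply)
lemma mzero_in_M[simp]: "mzero (M k) \<in> mcar (M k)"
  by (simp add: mzero_trunc)
lemma mact_in_M[simp]: "a \<in> mcar (M k) \<Longrightarrow> g \<in> carrier P \<Longrightarrow> mact (M k) a g \<in> mcar (M k)"
proof -
  assume "a \<in> mcar (M k)" "g \<in> carrier P"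
  then obtain v where "v \<in> Zpd p d" "a = trunc k v" using mcar_M_trunc by blast
  then show ?thesis using \<open>g \<in> carrier P\<close> by (simp add: mact_trunc)
qed

lemma mact_madd: "a \<in> mcar (M k) \<Longrightarrow> b \<in> mcar (M k) \<Longrightarrow> g \<in> carrier P \<Longrightarrow>
   mact (M k) (madd (M k) a b) g = madd (M k) (mact (M k) a g) (mact (M k) b g)"
proof -
  assume "a \<in> mcar (M k)" "b \<in> mcar (M k)" and g: "g \<in> carrier P"
  then obtain v w where "v \<in> Zpd p d" "a = trunc k v" "w \<in> Zpd p d" "b = trunc k w" using mcar_M_trunc by metis
  then show ?thesis using g by (simp add: mact_trunc madd_trunc act_zadd)
qed

lemma mact_mneg: "a \<in> mcar (M k) \<Longrightarrow> g \<in> carrier P \<Longrightarrow>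
   mact (M k) (mneg (M k) a) g = mneg (M k) (mact (M k) a g)"
proof -
  assume "a \<in> mcar (M k)" and g: "g \<in> carrier P"
  then obtain v where "v \<in> Zpd p d" "a = trunc k v" using mcar_M_trunc by blast
  then show ?thesis using g by (simp add: mact_trunc mneg_trunc act_zneg)
qed

lemma mact_mzero: "g \<in> carrier P \<Longrightarrow> mact (M k) (mzero (M k)) g = mzero (M k)"
  by (simp add: mzero_trunc mact_trunc act_zero)

lemma mact_one[simp]: "a \<in> mcar (M k) \<Longrightarrow> mact (M k) a \<one>\<^bsub>P\<^esub> = a"
proof -
  assume "a \<in> mcar (M k)"
  then obtain v where "v \<in> Zpd p d" "a = trunc k v" using mcar_M_trunc by blast
  then show ?thesis by (simp add: mact_trunc)
qed

lemma mact_mact: "a \<in> mcar (M k) \<Longrightarrow> g \<in> carrier P \<Longrightarrow> h \<in> carrier P \<Longrightarrow>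
   mact (M k) (mact (M k) a g) h = mact (M k) a (g \<otimes>\<^bsub>P\<^esub> h)"
proof -
  assume "a \<in> mcar (M k)" and g: "g \<in> carrier P" and h: "h \<in> carrier P"
  then obtain v where "v \<in> Zpd p d" "a = trunc k v" using mcar_M_trunc by blast
  then show ?thesis using g h by (simp add: mact_trunc act_act)
qed

lemma Tmod_simps[simp]: "mcar (Tmod p d act) = Zpd p d" "madd (Tmod p d act) = zadd p"
  "mzero (Tmod p d act) = (\<lambda>i n. 0)" "mneg (Tmod p d act) = zneg p" "mact (Tmod p d act) = act"
  by (simp_all add: Tmod_def)

lemma cobd1_T: "cobd1 P (Tmod p d act) f g h = zadd p (zadd p (f h) (zneg p (f (g \<otimes>\<^bsub>P\<^esub> h)))) (act (f g) h)"
  by (simp add: cobd1_def msub_def)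

lemma cobd2_T: "cobd2 P (Tmod p d act) f g h l =
   zadd p (zadd p (zadd p (f h l) (zneg p (f (g \<otimes>\<^bsub>P\<^esub> h) l))) (f g (h \<otimes>\<^bsub>P\<^esub> l))) (zneg p (act (f g h) l))"
  by (simp add: cobd2_def msub_def)

lemma msub_T: "msub (Tmod p d act) a b = zadd p a (zneg p b)"
  by (simp add: msub_def)

lemma trunc_zero: "trunc k (\<lambda>i n. 0) = mzero (M k)"
  by (simp add: trunc_def mzero_apply fun_eq_iff)

lemma Z2_trunc:
  assumes rho: "rho \<in> Z2 P (carrier P) (Tmod p d act)"
  shows "(\<lambda>g h. trunc k (rho g h)) \<in> Z2 P (carrier P) (M k)"
proof -
  have rZ: "g \<in> carrier P \<Longrightarrow> h \<in> carrier P \<Longrightarrow> rho g h \<in> Zpd p d" for g h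
    using rho unfolding Z2_def cochain2_def by auto
  have rc: "g \<in> carrier P \<Longrightarrow> h \<in> carrier P \<Longrightarrow> l \<in> carrier P \<Longrightarrow>
   zadd p (act (rho g h) l) (rho (g \<otimes>\<^bsub>P\<^esub> h) l) = zadd p (rho h l) (rho g (h \<otimes>\<^bsub>P\<^esub> l))" for g h l
    using rho unfolding Z2_def by auto
  show ?thesis
    using rho unfolding Z2_def cochain2_def
    by (auto simp: trunc_zero rZ rc madd_trunc mact_trunc)
qed

lemma Z2_madd:
  assumes e: "e \<in> Z2 P (carrier P) (M k)" and f: "f \<in> Z2 P (carrier P) (M k)"
  shows "(\<lambda>g h. madd (M k) (e g h) (f g h)) \<in> Z2 P (carrier P) (M k)"
proof -
  note eD = Z2_D[OF e] and fD = Z2_D[OF f]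
  have zz: "madd (M k) (mzero (M k)) (mzero (M k)) = mzero (M k)" by (simp add: fun_eq_iff madd_apply mzero_apply)
  have cochains: "e \<in> cochain2 P (carrier P) (M k)" "f \<in> cochain2 P (carrier P) (M k)"
    using e f unfolding Z2_def by blast+
  have "madd (M k) (mact (M k) (madd (M k) (e g h) (f g h)) l) (madd (M k) (e (g \<otimes>\<^bsub>P\<^esub> h) l) (f (g \<otimes>\<^bsub>P\<^esub> h) l))
      = madd (M k) (madd (M k) (e h l) (f h l)) (madd (M k) (e g (h \<otimes>\<^bsub>P\<^esub> l)) (f g (h \<otimes>\<^bsub>P\<^esub> l)))"
    if g: "g \<in> carrier P" and h: "h \<in> carrier P" and l: "l \<in> carrier P" for g h l
  proof (rule ext)
    fix i
    have h1: "(mact (M k) (e g h) l i + e (g \<otimes>\<^bsub>P\<^esub> h) l i) mod int p ^ k = (e h l i + e g (h \<otimes>\<^bsub>P\<^esub> l) i) mod int p ^ k"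
      using fun_cong[OF eD(4)[OF g h l], of i] by (simp add: madd_apply)
    have h2: "(mact (M k) (f g h) l i + f (g \<otimes>\<^bsub>P\<^esub> h) l i) mod int p ^ k = (f h l i + f g (h \<otimes>\<^bsub>P\<^esub> l) i) mod int p ^ k"
      using fun_cong[OF fD(4)[OF g h l], of i] by (simp add: madd_apply)
    show "madd (M k) (mact (M k) (madd (M k) (e g h) (f g h)) l) (madd (M k) (e (g \<otimes>\<^bsub>P\<^esub> h) l) (f (g \<otimes>\<^bsub>P\<^esub> h) l)) i
      = madd (M k) (madd (M k) (e h l) (f h l)) (madd (M k) (e g (h \<otimes>\<^bsub>P\<^esub> l)) (f g (h \<otimes>\<^bsub>P\<^esub> l))) i"
      unfolding mact_madd[OF eD(1)[OF g h] fD(1)[OF g h] l] madd_apply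
      by (simp only: mod_norm, rule mod_eq_by_comb2[OF h1 h2, of _ _ 1 1], simp add: algebra_simps)
  qed
  then show ?thesis
    using cochains eD(1) fD(1) zz unfolding Z2_def cochain2_def by auto
qed

lemma ext_mult_assoc_M:
  assumes tau: "\<tau> \<in> Z2 P (carrier P) (M k)"
    and x: "x = (g, a)" "g \<in> carrier P" "a \<in> mcar (M k)"
    and y: "y = (h, b)" "h \<in> carrier P" "b \<in> mcar (M k)"
    and z: "z = (l, c)" "l \<in> carrier P" "c \<in> mcar (M k)"
  shows "x \<otimes>\<^bsub>ext_group P (M k) \<tau>\<^esub> y \<otimes>\<^bsub>ext_group P (M k) \<tau>\<^esub> z
    = x \<otimes>\<^bsub>ext_group P (M k) \<tau>\<^esub> (y \<otimes>\<^bsub>ext_group P (M k) \<tau>\<^esub> z)"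
proof -
  note tau_Z2D = Z2_D[OF tau]
  have cc: "madd (M k) (mact (M k) (\<tau> g h) l) (\<tau> (g \<otimes>\<^bsub>P\<^esub> h) l) i = madd (M k) (\<tau> h l) (\<tau> g (h \<otimes>\<^bsub>P\<^esub> l)) i" for i
    using tau_Z2D(4)[OF x(2) y(2) z(2)] by simp
  have e1: "mact (M k) (madd (M k) (madd (M k) (mact (M k) a h) b) (\<tau> g h)) l
      = madd (M k) (madd (M k) (mact (M k) a (h \<otimes>\<^bsub>P\<^esub> l)) (mact (M k) b l)) (mact (M k) (\<tau> g h) l)"
    using x y z tau_Z2D(1) by (simp add: mact_madd mact_mact)
  have "madd (M k) (madd (M k) (mact (M k) (madd (M k) (madd (M k) (mact (M k) a h) b) (\<tau> g h)) l) c) (\<tau> (g \<otimes>\<^bsub>P\<^esub> h) l) i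
      = madd (M k) (madd (M k) (mact (M k) a (h \<otimes>\<^bsub>P\<^esub> l)) (madd (M k) (madd (M k) (mact (M k) b l) c) (\<tau> h l))) (\<tau> g (h \<otimes>\<^bsub>P\<^esub> l)) i"
    for i
    unfolding e1 madd_apply
    by (rule ext_assoc_mod) (use cc[of i] in \<open>simp only: madd_apply\<close>)
  then show ?thesis using x y z by (simp add: ext_mult P_assoc fun_eq_iff)
qed

lemma ext_group_is_group:
  assumes tau: "\<tau> \<in> Z2 P (carrier P) (M k)"
  shows "group (ext_group P (M k) \<tau>)"
proof (rule groupI)
  let ?G = "ext_group P (M k) \<tau>"
  note tau_Z2D = Z2_D[OF tau]
  show "\<one>\<^bsub>?G\<^esub> \<in> carrier ?G" by (simp add: ext_carrier ext_one)
  show "x \<otimes>\<^bsub>?G\<^esub> y \<in> carrier ?G" if "x \<in> carrier ?G" "y \<in> carrier ?G" for x y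
    using that tau_Z2D(1) by (auto simp: ext_carrier ext_mult)
  show "\<one>\<^bsub>?G\<^esub> \<otimes>\<^bsub>?G\<^esub> x = x" if hx: "x \<in> carrier ?G" for x
  proof -
    obtain g a where x: "x = (g, a)" "g \<in> carrier P" "a \<in> mcar (M k)" using hx by (auto simp: ext_carrier)
    have "madd (M k) (madd (M k) (mact (M k) (mzero (M k)) g) a) (\<tau> \<one>\<^bsub>P\<^esub> g) = a"
      using x by (intro M_eqI) (simp_all add: mact_mzero tau_Z2D(2) madd_apply mzero_apply mcar_mod_self)
    then show ?thesis using x by (simp add: ext_one ext_mult)
  qed
  show "\<exists>y\<in>carrier ?G. y \<otimes>\<^bsub>?G\<^esub> x = \<one>\<^bsub>?G\<^esub>" if hx: "x \<in> carrier ?G" for x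
  proof -
    obtain g a where x: "x = (g, a)" "g \<in> carrier P" "a \<in> mcar (M k)" using hx by (auto simp: ext_carrier)
    define b where "b = madd (M k) a (\<tau> (inv\<^bsub>P\<^esub> g) g)"
    define u where "u = mact (M k) (mneg (M k) b) (inv\<^bsub>P\<^esub> g)"
    have bM: "b \<in> mcar (M k)" using x tau_Z2D(1) by (simp add: b_def)
    have uM: "u \<in> mcar (M k)" using x bM by (simp add: u_def)
    have "mact (M k) u g = mneg (M k) b" using x bM by (simp add: u_def mact_mact)
    then have "madd (M k) (madd (M k) (mact (M k) u g) a) (\<tau> (inv\<^bsub>P\<^esub> g) g) = mzero (M k)"
      by (simp add: b_def fun_eq_iff madd_apply mneg_apply mzero_apply mod_simps)
    then have "(inv\<^bsub>P\<^esub> g, u) \<otimes>\<^bsub>?G\<^esub> x = \<one>\<^bsub>?G\<^esub>" using x by (simp add: ext_mult ext_one)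
    moreover have "(inv\<^bsub>P\<^esub> g, u) \<in> carrier ?G" using x uM by (simp add: ext_carrier)
    ultimately show ?thesis by blast
  qed
  show "x \<otimes>\<^bsub>?G\<^esub> y \<otimes>\<^bsub>?G\<^esub> z = x \<otimes>\<^bsub>?G\<^esub> (y \<otimes>\<^bsub>?G\<^esub> z)"
    if hxyz: "x \<in> carrier ?G" "y \<in> carrier ?G" "z \<in> carrier ?G" for x y z
  proof -
    obtain g a where x: "x = (g, a)" "g \<in> carrier P" "a \<in> mcar (M k)"
      using hxyz(1) by (auto simp: ext_carrier)
    obtain h b where y: "y = (h, b)" "h \<in> carrier P" "b \<in> mcar (M k)"
      using hxyz(2) by (auto simp: ext_carrier)
    obtain l c where z: "z = (l, c)" "l \<in> carrier P" "c \<in> mcar (M k)"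
      using hxyz(3) by (auto simp: ext_carrier)
    show ?thesis by (rule ext_mult_assoc_M[OF tau x y z])
  qed
qed

end

(* Exactly the condition for the graph {(l, c l) | l \<in> L} to be closed under the multiplication
   of Ext(\<tau>); cohomologically, \<tau> restricted to L is the coboundary of -c. *)
definition twisted_cocycle :: "('g, 'b) monoid_scheme \<Rightarrow> 'g set \<Rightarrow> ('g, 'a) pmod
    \<Rightarrow> ('g \<Rightarrow> 'g \<Rightarrow> 'a) \<Rightarrow> ('g \<Rightarrow> 'a) \<Rightarrow> bool" where
  "twisted_cocycle G L A \<tau> c \<longleftrightarrow> (\<forall>l\<in>L. c l \<in> mcar A) \<and> c \<one>\<^bsub>G\<^esub> = mzero A
     \<and> (\<forall>l\<in>L. \<forall>l'\<in>L. c (l \<otimes>\<^bsub>G\<^esub> l') = madd A (madd A (mact A (c l) l') (c l')) (\<tau> l l'))"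

locale twisted_ext = padic_module +
  fixes k :: nat and \<tau>
  assumes tau: "\<tau> \<in> Z2 P (carrier P) (M k)"
    and p_prime: "Factorial_Ring.prime p"
    and P_fin: "finite (carrier P)"
begin

abbreviation "G \<equiv> ext_group P (M k) \<tau>"

lemma group_G: "group G"
  by (rule ext_group_is_group[OF tau])

interpretation Pg: group P by (rule P_group)
interpretation Gg: group G by (rule group_G)

lemmas tau_Z2D = Z2_D[OF tau]

lemma fst_mult: "fst (x \<otimes>\<^bsub>G\<^esub> y) = fst x \<otimes>\<^bsub>P\<^esub> fst y"
  by (cases x; cases y) (simp add: ext_mult)

lemma fst_one: "fst \<one>\<^bsub>G\<^esub> = \<one>\<^bsub>P\<^esub>"
  by (simp add: ext_one)

lemma fst_carrier: "x \<in> carrier G \<Longrightarrow> fst x \<in> carrier P"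
  by (auto simp: ext_carrier)

lemma fst_pow: "x \<in> carrier G \<Longrightarrow> fst (x [^]\<^bsub>G\<^esub> (n::nat)) = fst x [^]\<^bsub>P\<^esub> n"
  by (induction n) (simp_all add: fst_one fst_mult)

lemma fst_inv: "x \<in> carrier G \<Longrightarrow> fst (inv\<^bsub>G\<^esub> x) = inv\<^bsub>P\<^esub> (fst x)"
proof -
  assume x: "x \<in> carrier G"
  have "fst (inv\<^bsub>G\<^esub> x) \<otimes>\<^bsub>P\<^esub> fst x = \<one>\<^bsub>P\<^esub>"
    using x by (simp flip: fst_mult add: fst_one)
  then show ?thesis using x by (intro Pg.inv_equality[symmetric]) (auto intro: fst_carrier)
qed

lemma kernel_subgroup: "subgroup ({\<one>\<^bsub>P\<^esub>} \<times> mcar (M k)) G"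
proof (rule Gg.subgroupI)
  show "{\<one>\<^bsub>P\<^esub>} \<times> mcar (M k) \<subseteq> carrier G" by (auto simp: ext_carrier)
  show "{\<one>\<^bsub>P\<^esub>} \<times> mcar (M k) \<noteq> {}" using mzero_in_M by blast
  show "a \<otimes>\<^bsub>G\<^esub> b \<in> {\<one>\<^bsub>P\<^esub>} \<times> mcar (M k)" if "a \<in> {\<one>\<^bsub>P\<^esub>} \<times> mcar (M k)" "b \<in> {\<one>\<^bsub>P\<^esub>} \<times> mcar (M k)" for a b
    using that tau_Z2D(1) by (auto simp: ext_mult)
  show "inv\<^bsub>G\<^esub> a \<in> {\<one>\<^bsub>P\<^esub>} \<times> mcar (M k)" if ha: "a \<in> {\<one>\<^bsub>P\<^esub>} \<times> mcar (M k)" for a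
  proof -
    have aG: "a \<in> carrier G" using ha by (auto simp: ext_carrier)
    have "fst (inv\<^bsub>G\<^esub> a) = \<one>\<^bsub>P\<^esub>" using fst_inv[OF aG] ha by auto
    moreover have "inv\<^bsub>G\<^esub> a \<in> carrier G" using aG by simp
    ultimately show ?thesis by (cases "inv\<^bsub>G\<^esub> a") (auto simp: ext_carrier)
  qed
qed

lemma commute_kernel_iff:
  assumes l: "l \<in> carrier P" and a: "a \<in> mcar (M k)" and u: "u \<in> mcar (M k)"
  shows "(l, a) \<otimes>\<^bsub>G\<^esub> (\<one>\<^bsub>P\<^esub>, u) = (\<one>\<^bsub>P\<^esub>, u) \<otimes>\<^bsub>G\<^esub> (l, a) \<longleftrightarrow> mact (M k) u l = u"
proof -
  have "(l, a) \<otimes>\<^bsub>G\<^esub> (\<one>\<^bsub>P\<^esub>, u) = (l, madd (M k) a u)"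
    using l a u tau_Z2D(3) by (simp add: ext_mult fun_eq_iff madd_apply mzero_apply mod_norm)
  moreover have "(\<one>\<^bsub>P\<^esub>, u) \<otimes>\<^bsub>G\<^esub> (l, a) = (l, madd (M k) (mact (M k) u l) a)"
    using l tau_Z2D(2) by (simp add: ext_mult fun_eq_iff madd_apply mzero_apply mod_norm)
  moreover have "madd (M k) a u = madd (M k) (mact (M k) u l) a \<longleftrightarrow> mact (M k) u l = u"
  proof
    assume h: "madd (M k) a u = madd (M k) (mact (M k) u l) a"
    show "mact (M k) u l = u"
    proof (rule M_eqI)
      show "mact (M k) u l \<in> mcar (M k)" "u \<in> mcar (M k)" using l u by auto
      fix i
      have "(a i + u i) mod int p ^ k = (mact (M k) u l i + a i) mod int p ^ k"
        using fun_cong[OF h, of i] by (simp add: madd_apply)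
      then have "(a i + u i + - a i) mod int p ^ k = (mact (M k) u l i + a i + - a i) mod int p ^ k"
        by (rule mod_add_right_cong)
      then show "mact (M k) u l i mod int p ^ k = u i mod int p ^ k" by simp
    qed
  qed (simp add: fun_eq_iff madd_apply add.commute)
  ultimately show ?thesis by simp
qed

(* If fst (c e^i) = 1, then either p divides i and e^i = 1, or fst e is a power of
   fst (e^i) = (fst c)^-1 \<in> fst ` C. *)
lemma join_cyclic_kernel_trivial:
  assumes E: "elem_ab p G E" and sC: "subgroup C G" and CE: "C \<subseteq> E"
    and CN: "\<forall>c\<in>C. fst c = \<one>\<^bsub>P\<^esub> \<longrightarrow> c = \<one>\<^bsub>G\<^esub>"
    and e: "e \<in> E" "fst e \<notin> fst ` C"
  shows "\<forall>a\<in>{c \<otimes>\<^bsub>G\<^esub> e [^]\<^bsub>G\<^esub> (i::nat) | c i. c \<in> C}. fst a = \<one>\<^bsub>P\<^esub> \<longrightarrow> a = \<one>\<^bsub>G\<^esub>"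
proof (intro ballI impI)
  have eE: "e [^]\<^bsub>G\<^esub> p = \<one>\<^bsub>G\<^esub>" and eG: "e \<in> carrier G"
    using E e(1) subgroup.subset unfolding elem_ab_def by blast+
  have cG: "c \<in> carrier G" if "c \<in> C" for c using that sC subgroup.subset by blast
  fix a assume ha: "a \<in> {c \<otimes>\<^bsub>G\<^esub> e [^]\<^bsub>G\<^esub> (i::nat) | c i. c \<in> C}" and fa: "fst a = \<one>\<^bsub>P\<^esub>"
  obtain c i where a: "a = c \<otimes>\<^bsub>G\<^esub> e [^]\<^bsub>G\<^esub> (i::nat)" "c \<in> C" using ha by blast
  have fc: "fst c \<in> carrier P" using cG[OF a(2)] fst_carrier by blast
  have fe: "fst e \<in> carrier P" using eG fst_carrier by blast
  have rel: "fst c \<otimes>\<^bsub>P\<^esub> fst e [^]\<^bsub>P\<^esub> i = \<one>\<^bsub>P\<^esub>"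
    using fa a eG by (simp add: fst_mult fst_pow)
  show "a = \<one>\<^bsub>G\<^esub>"
  proof (cases "p dvd i")
    case True
    then have "e [^]\<^bsub>G\<^esub> i = \<one>\<^bsub>G\<^esub>" using Gg.nat_pow_dvd_eq_one[OF eG eE] by blast
    then have "a = c" using a cG by simp
    then show ?thesis using CN a(2) fa by blast
  next
    case False
    then have i0: "i \<noteq> 0" by (metis dvd_0_right)
    have "gcd i p = 1"
      using prime_imp_coprime[OF p_prime False] by (simp add: coprime_iff_gcd_eq_1 gcd.commute)
    then obtain x y where xy: "i * x = p * y + 1" using bezout_nat[OF i0, of p] by auto
    have fep: "fst e [^]\<^bsub>P\<^esub> p = \<one>\<^bsub>P\<^esub>" using eE eG by (simp flip: fst_pow add: fst_one)
    have "fst e [^]\<^bsub>P\<^esub> (i * x) = fst e"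
      unfolding xy using fe fep by (simp add: Pg.nat_pow_mult[symmetric] Pg.nat_pow_pow[symmetric])
    moreover have "fst e [^]\<^bsub>P\<^esub> i = inv\<^bsub>P\<^esub> fst c"
      using rel fc fe by (metis Pg.inv_equality Pg.inv_comm Pg.nat_pow_closed)
    ultimately have "fst e = (inv\<^bsub>P\<^esub> fst c) [^]\<^bsub>P\<^esub> x"
      using fe by (simp add: Pg.nat_pow_pow[symmetric])
    also have "\<dots> = fst ((inv\<^bsub>G\<^esub> c) [^]\<^bsub>G\<^esub> x)"
      using cG[OF a(2)] by (simp add: fst_pow fst_inv)
    finally have "fst e \<in> fst ` C"
      using subgroup_nat_pow_closed[OF sC subgroup.m_inv_closed[OF sC a(2)]] by blast
    then show ?thesis using e(2) by blast
  qed
qed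

(* A subgroup of E meeting the kernel trivially with maximal image is a complement:
   otherwise it could be enlarged by a cyclic factor. *)
lemma elem_ab_complement:
  assumes E: "elem_ab p G E"
  obtains C where "subgroup C G" "C \<subseteq> E" "\<forall>c\<in>C. fst c = \<one>\<^bsub>P\<^esub> \<longrightarrow> c = \<one>\<^bsub>G\<^esub>" "fst ` C = fst ` E"
proof -
  have sE: "subgroup E G" using E unfolding elem_ab_def by blast
  have EG: "E \<subseteq> carrier G" using sE by (rule subgroup.subset)
  define S where "S = {C. subgroup C G \<and> C \<subseteq> E \<and> (\<forall>c\<in>C. fst c = \<one>\<^bsub>P\<^esub> \<longrightarrow> c = \<one>\<^bsub>G\<^esub>)}"
  have S1: "{\<one>\<^bsub>G\<^esub>} \<in> S"
    unfolding S_def using Gg.triv_subgroup subgroup.one_closed[OF sE] by auto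
  have CP: "fst ` C \<subseteq> carrier P" if "C \<in> S" for C
    using that unfolding S_def using EG fst_carrier by blast
  have Sb: "\<forall>C. C \<in> S \<longrightarrow> card (fst ` C) < Suc (card (carrier P))"
    using CP P_fin card_mono[of "carrier P"] by (simp add: le_imp_less_Suc)
  obtain C where C: "C \<in> S" and Cmax: "\<And>C'. C' \<in> S \<Longrightarrow> card (fst ` C') \<le> card (fst ` C)"
    using Lattices_Big.ex_has_greatest_nat[of "\<lambda>C. C \<in> S", OF S1 Sb] by blast
  have sC: "subgroup C G" and CE: "C \<subseteq> E" and CN: "\<forall>c\<in>C. fst c = \<one>\<^bsub>P\<^esub> \<longrightarrow> c = \<one>\<^bsub>G\<^esub>"
    using C unfolding S_def by auto
  have "fst ` C = fst ` E"
  proof (rule ccontr)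
    assume "fst ` C \<noteq> fst ` E"
    then obtain e where e: "e \<in> E" "fst e \<notin> fst ` C" using CE by blast
    have eG: "e \<in> carrier G" using e EG by blast
    define C' where "C' = {c \<otimes>\<^bsub>G\<^esub> e [^]\<^bsub>G\<^esub> (i::nat) | c i. c \<in> C}"
    have C'E: "C' \<subseteq> E"
      unfolding C'_def using CE subgroup_nat_pow_closed[OF sE e(1)] subgroup.m_closed[OF sE] by blast
    have C'sub: "subgroup C' G"
      unfolding C'_def by (rule Gg.subgroup_join_cyclic[OF prime_gt_0_nat[OF p_prime] E sC CE e(1)])
    have C'N: "\<forall>a\<in>C'. fst a = \<one>\<^bsub>P\<^esub> \<longrightarrow> a = \<one>\<^bsub>G\<^esub>"
      unfolding C'_def by (rule join_cyclic_kernel_trivial[OF E sC CE CN e])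
    have "C' \<in> S" unfolding S_def using C'sub C'E C'N by blast
    moreover have "fst ` C \<subset> fst ` C'"
    proof
      have "c \<in> C'" if "c \<in> C" for c
      proof -
        have "c = c \<otimes>\<^bsub>G\<^esub> e [^]\<^bsub>G\<^esub> (0::nat)" using that subgroup.subset[OF sC] by auto
        then show ?thesis unfolding C'_def using that by blast
      qed
      then show "fst ` C \<subseteq> fst ` C'" by blast
      have "e = \<one>\<^bsub>G\<^esub> \<otimes>\<^bsub>G\<^esub> e [^]\<^bsub>G\<^esub> (1::nat)" using eG by simp
      then have "e \<in> C'" unfolding C'_def using subgroup.one_closed[OF sC] by blast
      then show "fst ` C \<noteq> fst ` C'" using e(2) by blast
    qed
    moreover have "finite (fst ` C')" using CP[OF \<open>C' \<in> S\<close>] P_fin finite_subset by blast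
    ultimately have "card (fst ` C) < card (fst ` C')" by (simp add: psubset_card_mono)
    with Cmax[OF \<open>C' \<in> S\<close>] show False by simp
  qed
  then show ?thesis using that sC CE CN by blast
qed

lemma subgroup_fst_image:
  assumes sE: "subgroup E G"
  shows "subgroup (fst ` E) P"
proof (rule Pg.subgroupI)
  have EG: "E \<subseteq> carrier G" using sE by (rule subgroup.subset)
  show "fst ` E \<subseteq> carrier P" using EG fst_carrier by auto
  show "fst ` E \<noteq> {}" using subgroup.one_closed[OF sE] by auto
  show "inv\<^bsub>P\<^esub> a \<in> fst ` E" if ha: "a \<in> fst ` E" for a
  proof -
    obtain e where e: "e \<in> E" "a = fst e" using ha by blast
    then have "inv\<^bsub>P\<^esub> a = fst (inv\<^bsub>G\<^esub> e)" using EG fst_inv[of e] by auto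
    then show ?thesis using subgroup.m_inv_closed[OF sE e(1)] by blast
  qed
  show "a \<otimes>\<^bsub>P\<^esub> b \<in> fst ` E" if "a \<in> fst ` E" "b \<in> fst ` E" for a b
    using that subgroup.m_closed[OF sE] fst_mult by (metis (no_types, lifting) image_iff)
qed

lemma elem_ab_fst_image:
  assumes E: "elem_ab p G E"
  shows "elem_ab p P (fst ` E)"
proof -
  have sE: "subgroup E G" and cE: "\<And>x y. x \<in> E \<Longrightarrow> y \<in> E \<Longrightarrow> x \<otimes>\<^bsub>G\<^esub> y = y \<otimes>\<^bsub>G\<^esub> x"
    and eE: "\<And>x. x \<in> E \<Longrightarrow> x [^]\<^bsub>G\<^esub> p = \<one>\<^bsub>G\<^esub>"
    using E unfolding elem_ab_def by auto
  have "\<forall>x\<in>fst ` E. \<forall>y\<in>fst ` E. x \<otimes>\<^bsub>P\<^esub> y = y \<otimes>\<^bsub>P\<^esub> x"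
    using cE by (auto simp flip: fst_mult)
  moreover have "\<forall>x\<in>fst ` E. x [^]\<^bsub>P\<^esub> p = \<one>\<^bsub>P\<^esub>"
  proof
    fix a assume "a \<in> fst ` E"
    then obtain e where e: "e \<in> E" "a = fst e" by blast
    have "fst (e [^]\<^bsub>G\<^esub> p) = fst e [^]\<^bsub>P\<^esub> p" using e subgroup.subset[OF sE] fst_pow by blast
    then show "a [^]\<^bsub>P\<^esub> p = \<one>\<^bsub>P\<^esub>" using eE[OF e(1)] e(2) fst_one by simp
  qed
  ultimately show ?thesis unfolding elem_ab_def using subgroup_fst_image[OF sE] by blast
qed

lemma twisted_cocycleD:
  assumes "twisted_cocycle P L (M k) \<tau> c"
  shows "\<And>l. l \<in> L \<Longrightarrow> c l \<in> mcar (M k)" and "c \<one>\<^bsub>P\<^esub> = mzero (M k)"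
    and "\<And>l l'. l \<in> L \<Longrightarrow> l' \<in> L \<Longrightarrow>
      c (l \<otimes>\<^bsub>P\<^esub> l') = madd (M k) (madd (M k) (mact (M k) (c l) l') (c l')) (\<tau> l l')"
  using assms unfolding twisted_cocycle_def by auto

lemma graph_mult:
  assumes "twisted_cocycle P L (M k) \<tau> c" "l \<in> L" "l' \<in> L"
  shows "(l, c l) \<otimes>\<^bsub>G\<^esub> (l', c l') = (l \<otimes>\<^bsub>P\<^esub> l', c (l \<otimes>\<^bsub>P\<^esub> l'))"
  using twisted_cocycleD(3)[OF assms] by (simp add: ext_mult)

lemma graph_subgroup:
  assumes sL: "subgroup L P" and c: "twisted_cocycle P L (M k) \<tau> c"
  shows "subgroup ((\<lambda>l. (l, c l)) ` L) G"
proof (rule Gg.subgroupI)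
  have LP: "\<And>l. l \<in> L \<Longrightarrow> l \<in> carrier P" using subgroup.subset[OF sL] by blast
  note cM = twisted_cocycleD(1)[OF c] and c1 = twisted_cocycleD(2)[OF c]
  note gm = graph_mult[OF c]
  show "(\<lambda>l. (l, c l)) ` L \<subseteq> carrier G" using LP cM by (auto simp: ext_carrier)
  show "(\<lambda>l. (l, c l)) ` L \<noteq> {}" using subgroup.one_closed[OF sL] by blast
  show "a \<otimes>\<^bsub>G\<^esub> b \<in> (\<lambda>l. (l, c l)) ` L" if "a \<in> (\<lambda>l. (l, c l)) ` L" "b \<in> (\<lambda>l. (l, c l)) ` L" for a b
    using that gm subgroup.m_closed[OF sL] by auto
  show "inv\<^bsub>G\<^esub> a \<in> (\<lambda>l. (l, c l)) ` L" if ha: "a \<in> (\<lambda>l. (l, c l)) ` L" for a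
  proof -
    obtain l where l: "l \<in> L" "a = (l, c l)" using ha by blast
    have il: "inv\<^bsub>P\<^esub> l \<in> L" using subgroup.m_inv_closed[OF sL l(1)] .
    have "inv\<^bsub>G\<^esub> a = (inv\<^bsub>P\<^esub> l, c (inv\<^bsub>P\<^esub> l))"
    proof (rule Gg.inv_equality)
      show "(inv\<^bsub>P\<^esub> l, c (inv\<^bsub>P\<^esub> l)) \<otimes>\<^bsub>G\<^esub> a = \<one>\<^bsub>G\<^esub>"
        using gm[OF il l(1)] l LP c1 by (simp add: ext_one)
      show "a \<in> carrier G" using l LP cM by (auto simp: ext_carrier)
      show "(inv\<^bsub>P\<^esub> l, c (inv\<^bsub>P\<^esub> l)) \<in> carrier G" using il LP cM by (auto simp: ext_carrier)
    qed
    then show ?thesis using il by blast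
  qed
qed

lemma graph_elem_ab:
  assumes L: "elem_ab p P L" and c: "twisted_cocycle P L (M k) \<tau> c"
  shows "elem_ab p G ((\<lambda>l. (l, c l)) ` L)"
proof -
  have sL: "subgroup L P" and cL: "\<And>x y. x \<in> L \<Longrightarrow> y \<in> L \<Longrightarrow> x \<otimes>\<^bsub>P\<^esub> y = y \<otimes>\<^bsub>P\<^esub> x"
    and eL: "\<And>x. x \<in> L \<Longrightarrow> x [^]\<^bsub>P\<^esub> p = \<one>\<^bsub>P\<^esub>"
    using L unfolding elem_ab_def by auto
  note c1 = twisted_cocycleD(2)[OF c] and gm = graph_mult[OF c]
  have "\<forall>x\<in>(\<lambda>l. (l, c l)) ` L. \<forall>y\<in>(\<lambda>l. (l, c l)) ` L. x \<otimes>\<^bsub>G\<^esub> y = y \<otimes>\<^bsub>G\<^esub> x"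
    using gm cL by auto
  moreover have "\<forall>x\<in>(\<lambda>l. (l, c l)) ` L. x [^]\<^bsub>G\<^esub> p = \<one>\<^bsub>G\<^esub>"
  proof
    fix x assume "x \<in> (\<lambda>l. (l, c l)) ` L"
    then obtain l where l: "l \<in> L" "x = (l, c l)" by blast
    have "x [^]\<^bsub>G\<^esub> (n::nat) = (l [^]\<^bsub>P\<^esub> n, c (l [^]\<^bsub>P\<^esub> n))" for n
    proof (induction n)
      case 0 then show ?case using c1 by (simp add: ext_one)
    next
      case (Suc n)
      then show ?case using gm[OF subgroup_nat_pow_closed[OF sL l(1), of n] l(1)] l by simp
    qed
    then show "x [^]\<^bsub>G\<^esub> p = \<one>\<^bsub>G\<^esub>" using eL[OF l(1)] c1 by (simp add: ext_one)
  qed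
  ultimately show ?thesis unfolding elem_ab_def using graph_subgroup[OF sL c] by blast
qed

lemma kernel_trivial_fst_inj:
  assumes sC: "subgroup C G" and CN: "\<forall>c\<in>C. fst c = \<one>\<^bsub>P\<^esub> \<longrightarrow> c = \<one>\<^bsub>G\<^esub>"
    and c: "c \<in> C" "c' \<in> C" "fst c = fst c'"
  shows "c = c'"
proof -
  have CG: "c \<in> carrier G" "c' \<in> carrier G" using c subgroup.subset[OF sC] by blast+
  have "inv\<^bsub>G\<^esub> c \<otimes>\<^bsub>G\<^esub> c' \<in> C" using c sC by (simp add: subgroup.m_closed subgroup.m_inv_closed)
  moreover have "fst (inv\<^bsub>G\<^esub> c \<otimes>\<^bsub>G\<^esub> c') = \<one>\<^bsub>P\<^esub>"
    using c CG fst_carrier by (simp add: fst_mult fst_inv)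
  ultimately have "inv\<^bsub>G\<^esub> c \<otimes>\<^bsub>G\<^esub> c' = \<one>\<^bsub>G\<^esub>" using CN by blast
  then show ?thesis using CG by (simp add: Gg.inv_solve_left')
qed

lemma complement_is_graph:
  assumes sC: "subgroup C G" and CN: "\<forall>c\<in>C. fst c = \<one>\<^bsub>P\<^esub> \<longrightarrow> c = \<one>\<^bsub>G\<^esub>"
  obtains c where "twisted_cocycle P (fst ` C) (M k) \<tau> c" "C = (\<lambda>l. (l, c l)) ` fst ` C"
proof -
  let ?L = "fst ` C"
  have CG: "\<And>c. c \<in> C \<Longrightarrow> c \<in> carrier G" using subgroup.subset[OF sC] by blast
  note uniq = kernel_trivial_fst_inj[OF sC CN]
  define s where "s l = (THE c. c \<in> C \<and> fst c = l)" for l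
  have s: "s l \<in> C \<and> fst (s l) = l" if hl: "l \<in> ?L" for l
  proof -
    obtain c where "c \<in> C" "fst c = l" using hl by blast
    then have "\<exists>!c. c \<in> C \<and> fst c = l" using uniq by blast
    then show ?thesis unfolding s_def by (rule theI')
  qed
  define cf where "cf l = snd (s l)" for l
  have seq: "s l = (l, cf l)" if "l \<in> ?L" for l using s[OF that] unfolding cf_def by (cases "s l") auto
  have sL: "subgroup ?L P" by (rule subgroup_fst_image[OF sC])
  have one: "\<one>\<^bsub>P\<^esub> \<in> ?L" using subgroup.one_closed[OF sL] .
  have "twisted_cocycle P ?L (M k) \<tau> cf"
    unfolding twisted_cocycle_def
  proof (intro conjI ballI)
    show "cf l \<in> mcar (M k)" if l: "l \<in> ?L" for l
      using CG[OF conjunct1[OF s[OF l]]] seq[OF l] by (simp add: ext_carrier)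
    have "s \<one>\<^bsub>P\<^esub> = \<one>\<^bsub>G\<^esub>"
      using uniq[OF conjunct1[OF s[OF one]] subgroup.one_closed[OF sC]] s[OF one] by (simp add: fst_one)
    then show "cf \<one>\<^bsub>P\<^esub> = mzero (M k)" using seq[OF one] by (simp add: ext_one)
    fix l l' assume l: "l \<in> ?L" and l': "l' \<in> ?L"
    have ll': "l \<otimes>\<^bsub>P\<^esub> l' \<in> ?L" using subgroup.m_closed[OF sL l l'] .
    have "s l \<otimes>\<^bsub>G\<^esub> s l' \<in> C" using s l l' subgroup.m_closed[OF sC] by blast
    moreover have "fst (s l \<otimes>\<^bsub>G\<^esub> s l') = l \<otimes>\<^bsub>P\<^esub> l'" using s l l' by (simp add: fst_mult)
    ultimately have "s (l \<otimes>\<^bsub>P\<^esub> l') = s l \<otimes>\<^bsub>G\<^esub> s l'"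
      using uniq[of "s (l \<otimes>\<^bsub>P\<^esub> l')" "s l \<otimes>\<^bsub>G\<^esub> s l'"] s[OF ll'] by simp
    then show "cf (l \<otimes>\<^bsub>P\<^esub> l') = madd (M k) (madd (M k) (mact (M k) (cf l) l') (cf l')) (\<tau> l l')"
      using seq[OF l] seq[OF l'] seq[OF ll'] by (simp add: ext_mult)
  qed
  moreover have "C = (\<lambda>l. (l, cf l)) ` ?L"
  proof
    show "C \<subseteq> (\<lambda>l. (l, cf l)) ` ?L"
    proof
      fix x assume x: "x \<in> C"
      then have fx: "fst x \<in> ?L" by blast
      have "x = s (fst x)" using s[OF fx] by (intro uniq[OF x]) simp_all
      then have "x = (fst x, cf (fst x))" using seq[OF fx] by simp
      then show "x \<in> (\<lambda>l. (l, cf l)) ` ?L" using fx by (rule image_eqI)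
    qed
    show "(\<lambda>l. (l, cf l)) ` ?L \<subseteq> C"
    proof
      fix y assume "y \<in> (\<lambda>l. (l, cf l)) ` ?L"
      then obtain l where l: "l \<in> ?L" and y: "y = (l, cf l)" by blast
      show "y \<in> C" using s[OF l] unfolding y seq[OF l, symmetric] by blast
    qed
  qed
  ultimately show ?thesis by (rule that)
qed

lemma elem_ab_decomposition:
  assumes E: "elem_ab p G E"
  obtains c where "twisted_cocycle P (fst ` E) (M k) \<tau> c"
    "E = ((\<lambda>l. (l, c l)) ` fst ` E) <#>\<^bsub>G\<^esub> (E \<inter> ({\<one>\<^bsub>P\<^esub>} \<times> mcar (M k)))"
proof -
  have sE: "subgroup E G" using E unfolding elem_ab_def by blast
  have EG: "\<And>x. x \<in> E \<Longrightarrow> x \<in> carrier G" using subgroup.subset[OF sE] by blast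
  obtain C where sC: "subgroup C G" and CE: "C \<subseteq> E"
    and CN: "\<forall>c\<in>C. fst c = \<one>\<^bsub>P\<^esub> \<longrightarrow> c = \<one>\<^bsub>G\<^esub>" and CL: "fst ` C = fst ` E"
    using elem_ab_complement[OF E] by blast
  obtain c where c: "twisted_cocycle P (fst ` E) (M k) \<tau> c" and Cc: "C = (\<lambda>l. (l, c l)) ` fst ` E"
    using complement_is_graph[OF sC CN] unfolding CL by blast
  let ?N = "{\<one>\<^bsub>P\<^esub>} \<times> mcar (M k)"
  have "E \<subseteq> C <#>\<^bsub>G\<^esub> (E \<inter> ?N)"
  proof
    fix e assume e: "e \<in> E"
    define s where "s = (fst e, c (fst e))"
    have sC': "s \<in> C" unfolding s_def Cc using e by blast
    then have sE': "s \<in> E" using CE by blast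
    define q where "q = inv\<^bsub>G\<^esub> s \<otimes>\<^bsub>G\<^esub> e"
    have qE: "q \<in> E" unfolding q_def using sE' e sE by (simp add: subgroup.m_closed subgroup.m_inv_closed)
    have "fst q = \<one>\<^bsub>P\<^esub>" unfolding q_def using EG[OF sE'] EG[OF e] fst_carrier
      by (simp add: fst_mult fst_inv s_def)
    then have qN: "q \<in> ?N" using EG[OF qE] by (cases q) (auto simp: ext_carrier)
    have "e = s \<otimes>\<^bsub>G\<^esub> q" unfolding q_def using EG[OF sE'] EG[OF e]
      by (simp add: Gg.m_assoc[symmetric])
    then show "e \<in> C <#>\<^bsub>G\<^esub> (E \<inter> ?N)" unfolding set_mult_def using sC' qE qN by blast
  qed
  moreover have "C <#>\<^bsub>G\<^esub> (E \<inter> ?N) \<subseteq> E"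
    unfolding set_mult_def using CE subgroup.m_closed[OF sE] by blast
  ultimately have E_eq: "E = C <#>\<^bsub>G\<^esub> (E \<inter> ?N)" by blast
  show ?thesis by (rule that[OF c E_eq[unfolded Cc]])
qed

lemma elem_ab_centralises_kernel:
  assumes E: "elem_ab p G E" and x: "x \<in> E" and u: "(\<one>\<^bsub>P\<^esub>, u) \<in> E"
  shows "mact (M k) u (fst x) = u"
proof -
  have EG: "E \<subseteq> carrier G" using E subgroup.subset unfolding elem_ab_def by blast
  obtain l a where la: "x = (l, a)" "l \<in> carrier P" "a \<in> mcar (M k)"
    using EG x by (cases x) (auto simp: ext_carrier)
  have uM: "u \<in> mcar (M k)" using EG u by (auto simp: ext_carrier)
  have "x \<otimes>\<^bsub>G\<^esub> (\<one>\<^bsub>P\<^esub>, u) = (\<one>\<^bsub>P\<^esub>, u) \<otimes>\<^bsub>G\<^esub> x" using E x u unfolding elem_ab_def by blast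
  then show ?thesis using commute_kernel_iff[OF la(2,3) uM] la(1) by simp
qed

lemma fst_graph_set_mult:
  assumes Q1: "\<one>\<^bsub>G\<^esub> \<in> Q" and QN: "Q \<subseteq> {\<one>\<^bsub>P\<^esub>} \<times> mcar (M k)" and LP: "L \<subseteq> carrier P"
  shows "fst ` (((\<lambda>l. (l, a l)) ` L) <#>\<^bsub>G\<^esub> Q) = L"
proof
  show "fst ` (((\<lambda>l. (l, a l)) ` L) <#>\<^bsub>G\<^esub> Q) \<subseteq> L"
  proof
    fix y assume "y \<in> fst ` (((\<lambda>l. (l, a l)) ` L) <#>\<^bsub>G\<^esub> Q)"
    then obtain l q where lq: "l \<in> L" "q \<in> Q" "y = fst ((l, a l) \<otimes>\<^bsub>G\<^esub> q)" unfolding set_mult_def by blast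
    have "fst q = \<one>\<^bsub>P\<^esub>" using lq(2) QN by auto
    then show "y \<in> L" using lq LP by (auto simp: fst_mult)
  qed
  show "L \<subseteq> fst ` (((\<lambda>l. (l, a l)) ` L) <#>\<^bsub>G\<^esub> Q)"
  proof
    fix l assume l: "l \<in> L"
    have "fst ((l, a l) \<otimes>\<^bsub>G\<^esub> \<one>\<^bsub>G\<^esub>) = l" using l LP by (auto simp: fst_mult fst_one)
    moreover have "(l, a l) \<otimes>\<^bsub>G\<^esub> \<one>\<^bsub>G\<^esub> \<in> ((\<lambda>l. (l, a l)) ` L) <#>\<^bsub>G\<^esub> Q"
      unfolding set_mult_def using l Q1 by blast
    ultimately show "l \<in> fst ` (((\<lambda>l. (l, a l)) ` L) <#>\<^bsub>G\<^esub> Q)" by force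
  qed
qed

lemma twisted_cocycle_add:
  assumes LP: "L \<subseteq> carrier P" and t: "twisted_cocycle P L (M k) \<tau> t" and \<gamma>: "\<gamma> \<in> Z1 P L (M k)"
  shows "twisted_cocycle P L (M k) \<tau> (\<lambda>l. madd (M k) (t l) (\<gamma> l))"
proof -
  note tM = twisted_cocycleD(1)[OF t] and t1 = twisted_cocycleD(2)[OF t]
    and tr = twisted_cocycleD(3)[OF t]
  have gM: "\<And>l. l \<in> L \<Longrightarrow> \<gamma> l \<in> mcar (M k)" and g1: "\<gamma> \<one>\<^bsub>P\<^esub> = mzero (M k)"
    and gr: "\<And>l l'. l \<in> L \<Longrightarrow> l' \<in> L \<Longrightarrow> \<gamma> (l \<otimes>\<^bsub>P\<^esub> l') = madd (M k) (mact (M k) (\<gamma> l) l') (\<gamma> l')"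
    using \<gamma> unfolding Z1_def cochain1_def by auto
  show ?thesis
    unfolding twisted_cocycle_def
  proof (intro conjI ballI)
    show "madd (M k) (t l) (\<gamma> l) \<in> mcar (M k)" if "l \<in> L" for l using that tM gM by simp
    show "madd (M k) (t \<one>\<^bsub>P\<^esub>) (\<gamma> \<one>\<^bsub>P\<^esub>) = mzero (M k)"
      by (simp add: t1 g1 fun_eq_iff madd_apply mzero_apply)
    fix l l' assume l: "l \<in> L" and l': "l' \<in> L"
    have e: "mact (M k) (madd (M k) (t l) (\<gamma> l)) l' = madd (M k) (mact (M k) (t l) l') (mact (M k) (\<gamma> l) l')"
      using tM gM l l' LP by (simp add: mact_madd subsetD)
    show "madd (M k) (t (l \<otimes>\<^bsub>P\<^esub> l')) (\<gamma> (l \<otimes>\<^bsub>P\<^esub> l')) =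
        madd (M k) (madd (M k) (mact (M k) (madd (M k) (t l) (\<gamma> l)) l') (madd (M k) (t l') (\<gamma> l'))) (\<tau> l l')"
      unfolding tr[OF l l'] gr[OF l l'] e
      by (rule ext) (simp only: madd_apply mod_norm, rule arg_cong[where f = "\<lambda>z. z mod int p ^ k"], simp add: algebra_simps)
  qed
qed

lemma twisted_cocycle_diff:
  assumes sL: "subgroup L P"
    and t: "twisted_cocycle P L (M k) \<tau> t" and c: "twisted_cocycle P L (M k) \<tau> c"
  shows "(\<lambda>l. if l \<in> L then madd (M k) (c l) (mneg (M k) (t l)) else mzero (M k)) \<in> Z1 P L (M k)"
    (is "?\<gamma> \<in> _")
proof -
  note tM = twisted_cocycleD(1)[OF t] and t1 = twisted_cocycleD(2)[OF t]
    and tr = twisted_cocycleD(3)[OF t]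
  note cM = twisted_cocycleD(1)[OF c] and c1 = twisted_cocycleD(2)[OF c]
    and cr = twisted_cocycleD(3)[OF c]
  show ?thesis
    unfolding Z1_def cochain1_def
  proof (intro CollectI conjI ballI allI impI)
    show "?\<gamma> l \<in> mcar (M k)" if "l \<in> L" for l using that cM tM by simp
    show "?\<gamma> l = mzero (M k)" if "l \<notin> L" for l using that by simp
    show "?\<gamma> \<one>\<^bsub>P\<^esub> = mzero (M k)"
      using sL by (simp add: c1 t1 subgroup.one_closed fun_eq_iff madd_apply mneg_apply mzero_apply)
    fix l l' assume l: "l \<in> L" and l': "l' \<in> L"
    have e: "mact (M k) (madd (M k) (c l) (mneg (M k) (t l))) l'
        = madd (M k) (mact (M k) (c l) l') (mneg (M k) (mact (M k) (t l) l'))"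
      using tM cM l l' subgroup.subset[OF sL] by (simp add: mact_madd mact_mneg subsetD)
    have "madd (M k) (c (l \<otimes>\<^bsub>P\<^esub> l')) (mneg (M k) (t (l \<otimes>\<^bsub>P\<^esub> l'))) =
        madd (M k) (mact (M k) (madd (M k) (c l) (mneg (M k) (t l))) l') (madd (M k) (c l') (mneg (M k) (t l')))"
      unfolding tr[OF l l'] cr[OF l l'] e
      by (rule ext) (simp only: madd_apply mneg_apply mod_norm, rule arg_cong[where f = "\<lambda>z. z mod int p ^ k"], simp add: algebra_simps)
    then show "?\<gamma> (l \<otimes>\<^bsub>P\<^esub> l') = madd (M k) (mact (M k) (?\<gamma> l) l') (?\<gamma> l')"
      using l l' subgroup.m_closed[OF sL l l'] by simp
  qed
qed

end

section \<open>Restricting rho and eta to a subgroup over which G_x splits\<close>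

context padic_module
begin

definition "zsum A f = (\<lambda>i n. (\<Sum>g\<in>A. f g i n) mod int p ^ n)"

lemma zsum_Zpd[simp]: "(\<And>g. g \<in> A \<Longrightarrow> f g \<in> Zpd p d) \<Longrightarrow> zsum A f \<in> Zpd p d"
  unfolding zsum_def
proof (rule Zpd_of_compatible[OF p_pos])
  fix i n assume fZ: "\<And>g. g \<in> A \<Longrightarrow> f g \<in> Zpd p d"
  have e: "(\<Sum>g\<in>A. f g i (Suc n) mod int p ^ n) = (\<Sum>g\<in>A. f g i n mod int p ^ n)"
    by (rule sum.cong) (auto simp: Zpd_compatible_mod[OF fZ])
  have "(\<Sum>g\<in>A. f g i (Suc n)) mod int p ^ n = (\<Sum>g\<in>A. f g i (Suc n) mod int p ^ n) mod int p ^ n"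
    by (simp add: mod_sum_eq)
  also have "\<dots> = (\<Sum>g\<in>A. f g i n mod int p ^ n) mod int p ^ n" unfolding e ..
  also have "\<dots> = (\<Sum>g\<in>A. f g i n) mod int p ^ n" by (simp add: mod_sum_eq)
  finally show "(\<Sum>g\<in>A. f g i (Suc n)) mod int p ^ n = (\<Sum>g\<in>A. f g i n) mod int p ^ n" .
next
  fix i n assume fZ: "\<And>g. g \<in> A \<Longrightarrow> f g \<in> Zpd p d" and "d \<le> i"
  then show "(\<Sum>g\<in>A. f g i n) mod int p ^ n = 0" using Zpd_coord_high[OF fZ] by simp
qed

lemma act_zsum:
  assumes A: "finite A" and fZ: "\<And>g. g \<in> A \<Longrightarrow> f g \<in> Zpd p d" and l: "l \<in> carrier P"
  shows "act (zsum A f) l = zsum A (\<lambda>g. act (f g) l)"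
  using A fZ
proof (induction A rule: finite_induct)
  case empty
  then show ?case using act_zero[OF l] by (simp add: zsum_def)
next
  case (insert a A)
  have e: "zsum (insert a A) f = zadd p (f a) (zsum A f)" for f
    using insert(1,2) by (simp add: zsum_def zadd_def fun_eq_iff mod_norm)
  have IH: "act (zsum A f) l = zsum A (\<lambda>g. act (f g) l)" using insert by blast
  show ?case unfolding e using insert(4) l IH by (simp add: act_zadd)
qed

end

locale splitting_subgroup = padic_module +
  fixes L cf rho eta etax m x
  assumes rho: "rho \<in> Z2 P (carrier P) (Tmod p d act)"
    and eta: "eta \<in> Z3 P (carrier P) (Tmod p d act)"
    and etaxJ: "etax \<in> Jc P p d m act x"
    and etax_eta: "(\<lambda>g h k. msub (Tmod p d act) (conn P p d m act x etax g h k) (eta g h k))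
                     \<in> B3 P (carrier P) (Tmod p d act)"
    and Pord: "card (carrier P) = p ^ m"
    and P_fin: "finite (carrier P)"
    and Lsub: "subgroup L P"
    and cf: "twisted_cocycle P L (M (x + 3 * m))
               (\<lambda>g h. madd (M (x + 3 * m)) (trunc (x + 3 * m) (rho g h)) (etax g h)) cf"
begin

abbreviation "kk \<equiv> x + 3 * m"

lemma cf_in_M: "l \<in> L \<Longrightarrow> cf l \<in> mcar (M kk)"
  using cf unfolding twisted_cocycle_def by blast

lemma cf_one: "cf \<one>\<^bsub>P\<^esub> = mzero (M kk)"
  using cf unfolding twisted_cocycle_def by blast

lemma cf_mult: "l \<in> L \<Longrightarrow> l' \<in> L \<Longrightarrow>
    cf (l \<otimes>\<^bsub>P\<^esub> l') = madd (M kk) (madd (M kk) (mact (M kk) (cf l) l') (cf l'))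
      (madd (M kk) (trunc kk (rho l l')) (etax l l'))"
  using cf unfolding twisted_cocycle_def by blast

lemma L_carrier: "l \<in> L \<Longrightarrow> l \<in> carrier P"
  using subgroup.subset[OF Lsub] by blast

lemma L_one[simp]: "\<one>\<^bsub>P\<^esub> \<in> L" using subgroup.one_closed[OF Lsub] .
lemma L_mult[simp]: "l \<in> L \<Longrightarrow> l' \<in> L \<Longrightarrow> l \<otimes>\<^bsub>P\<^esub> l' \<in> L" using subgroup.m_closed[OF Lsub] .

lemma rho_Zpd[simp]: "g \<in> carrier P \<Longrightarrow> h \<in> carrier P \<Longrightarrow> rho g h \<in> Zpd p d"
  using rho unfolding Z2_def cochain2_def by auto
lemma rho_one: "rho \<one>\<^bsub>P\<^esub> g = (\<lambda>i n. 0)" "rho g \<one>\<^bsub>P\<^esub> = (\<lambda>i n. 0)"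
  using rho unfolding Z2_def cochain2_def by auto
lemma rho_cocycle_eq: "g \<in> carrier P \<Longrightarrow> h \<in> carrier P \<Longrightarrow> l \<in> carrier P \<Longrightarrow>
   zadd p (act (rho g h) l) (rho (g \<otimes>\<^bsub>P\<^esub> h) l) = zadd p (rho h l) (rho g (h \<otimes>\<^bsub>P\<^esub> l))"
  using rho unfolding Z2_def by auto

lemma etax_Z2: "etax \<in> Z2 P (carrier P) (M kk)"
  using etaxJ unfolding Jc_def Mx_def by auto
lemma etax_in_M[simp]: "g \<in> carrier P \<Longrightarrow> h \<in> carrier P \<Longrightarrow> etax g h \<in> mcar (M kk)"
  using Z2_D(1)[OF etax_Z2] by blast

(* Lifts to T; the splitting relation for cf says that defect vanishes modulo p^kk. *)
definition "c_lift l = liftM p (cf l)"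
definition "eta_lift g h = liftM p (etax g h)"
definition "cobd_c_lift l l' = zadd p (zadd p (c_lift l') (zneg p (c_lift (l \<otimes>\<^bsub>P\<^esub> l')))) (act (c_lift l) l')"
definition "defect l l' = zadd p (zadd p (rho l l') (eta_lift l l')) (cobd_c_lift l l')"

lemma c_lift_Zpd[simp]: "l \<in> L \<Longrightarrow> c_lift l \<in> Zpd p d"
  unfolding c_lift_def using liftM_in_Zpd[OF cf_in_M] by simp
lemma eta_lift_Zpd[simp]: "g \<in> carrier P \<Longrightarrow> h \<in> carrier P \<Longrightarrow> eta_lift g h \<in> Zpd p d"
  unfolding eta_lift_def using liftM_in_Zpd[OF etax_in_M] by simp
lemma cobd_c_lift_Zpd[simp]: "l \<in> L \<Longrightarrow> l' \<in> L \<Longrightarrow> cobd_c_lift l l' \<in> Zpd p d"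
  unfolding cobd_c_lift_def using L_carrier by simp
lemma defect_Zpd[simp]: "l \<in> L \<Longrightarrow> l' \<in> L \<Longrightarrow> defect l l' \<in> Zpd p d"
  unfolding defect_def using L_carrier by simp

lemma c_lift_apply: "c_lift l i n = cf l i mod int p ^ n"
  by (simp add: c_lift_def liftM_def)

lemma defect_level: assumes l: "l \<in> L" and l': "l' \<in> L" shows "defect l l' i kk = 0"
proof -
  have ma: "mact (M kk) (cf l) l' i = act (c_lift l) l' i kk"
    by (simp add: Mmod_def c_lift_def trunc_def)
  have r: "cf (l \<otimes>\<^bsub>P\<^esub> l') i = ((act (c_lift l) l' i kk + cf l' i) mod int p ^ kk + (rho l l' i kk + etax l l' i) mod int p ^ kk) mod int p ^ kk"
    using fun_cong[OF cf_mult[OF l l'], of i] by (simp add: madd_apply ma trunc_def)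
  show ?thesis
    unfolding defect_def cobd_c_lift_def z_apply eta_lift_def liftM_def c_lift_apply r
    by (simp add: mod_simps algebra_simps)
qed

definition "defect_quot l l' = (if l \<in> L \<and> l' \<in> L then zquot p kk (defect l l') else (\<lambda>i n. 0))"

lemma defect_eq: "l \<in> L \<Longrightarrow> l' \<in> L \<Longrightarrow> defect l l' = zsmul p (int p ^ kk) (defect_quot l l')"
  unfolding defect_quot_def using Zpd_div_pow(2)[OF p_pos defect_Zpd defect_level] by simp

lemma defect_quot_Zpd[simp]: "defect_quot l l' \<in> Zpd p d"
  unfolding defect_quot_def using Zpd_div_pow(1)[OF p_pos defect_Zpd defect_level] by simp

lemma eta_lift_eq:
  assumes l: "l \<in> L" and l': "l' \<in> L"
  shows "eta_lift l l' = zadd p (zsmul p (int p ^ kk) (defect_quot l l')) (zneg p (zadd p (rho l l') (cobd_c_lift l l')))"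
proof (rule Zpd_eqI)
  show "eta_lift l l' \<in> Zpd p d" using l l' L_carrier by simp
  show "zadd p (zsmul p (int p ^ kk) (defect_quot l l')) (zneg p (zadd p (rho l l') (cobd_c_lift l l'))) \<in> Zpd p d"
    using l l' L_carrier by simp
  fix i n
  have h: "(rho l l' i n + eta_lift l l' i n + cobd_c_lift l l' i n) mod int p ^ n = (int p ^ kk * defect_quot l l' i n) mod int p ^ n"
    using fun_cong[OF fun_cong[OF defect_eq[OF l l'], of i], of n] unfolding defect_def z_apply by (simp add: mod_simps)
  show "eta_lift l l' i n mod int p ^ n = zadd p (zsmul p (int p ^ kk) (defect_quot l l')) (zneg p (zadd p (rho l l') (cobd_c_lift l l'))) i n mod int p ^ n"
    unfolding z_apply
    by (simp only: mod_norm, rule mod_eq_by_comb1[OF h, of _ _ 1], simp add: algebra_simps)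
qed

lemma act_cobd_c_lift: "g \<in> L \<Longrightarrow> h \<in> L \<Longrightarrow> l \<in> carrier P \<Longrightarrow>
  act (cobd_c_lift g h) l = zadd p (zadd p (act (c_lift h) l) (zneg p (act (c_lift (g \<otimes>\<^bsub>P\<^esub> h)) l))) (act (c_lift g) (h \<otimes>\<^bsub>P\<^esub> l))"
  unfolding cobd_c_lift_def using L_carrier by (simp add: act_zadd act_zneg act_act)

lemma act_eta_lift: "g \<in> L \<Longrightarrow> h \<in> L \<Longrightarrow> l \<in> carrier P \<Longrightarrow>
  act (eta_lift g h) l = zadd p (zsmul p (int p ^ kk) (act (defect_quot g h) l)) (zneg p (zadd p (act (rho g h) l) (act (cobd_c_lift g h) l)))"
  using L_carrier by (simp add: eta_lift_eq act_zadd act_zneg act_zsmul)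

(* eta_lift = p^kk defect_quot - rho - \<delta>c_lift on L, where rho is a cocycle and \<delta>\<delta> = 0. *)
lemma cobd2_eta_lift:
  assumes g: "g \<in> L" and h: "h \<in> L" and l: "l \<in> L"
  shows "cobd2 P (Tmod p d act) eta_lift g h l = zsmul p (int p ^ kk) (cobd2 P (Tmod p d act) defect_quot g h l)"
proof (rule Zpd_eqI)
  note gP = L_carrier[OF g] and hP = L_carrier[OF h] and lP = L_carrier[OF l]
  show "cobd2 P (Tmod p d act) eta_lift g h l \<in> Zpd p d" using g h l gP hP lP by (simp add: cobd2_T)
  show "zsmul p (int p ^ kk) (cobd2 P (Tmod p d act) defect_quot g h l) \<in> Zpd p d" using g h l gP hP lP by (simp add: cobd2_T)
  fix i n
  have as: "g \<otimes>\<^bsub>P\<^esub> h \<otimes>\<^bsub>P\<^esub> l = g \<otimes>\<^bsub>P\<^esub> (h \<otimes>\<^bsub>P\<^esub> l)" using P_assoc gP hP lP by blast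
  have coc: "(act (rho g h) l i n + rho (g \<otimes>\<^bsub>P\<^esub> h) l i n) mod int p ^ n = (rho h l i n + rho g (h \<otimes>\<^bsub>P\<^esub> l) i n) mod int p ^ n"
    using fun_cong[OF fun_cong[OF rho_cocycle_eq[OF gP hP lP], of i], of n] by (simp add: z_apply)
  show "cobd2 P (Tmod p d act) eta_lift g h l i n mod int p ^ n = zsmul p (int p ^ kk) (cobd2 P (Tmod p d act) defect_quot g h l) i n mod int p ^ n"
    unfolding cobd2_T act_eta_lift[OF g h lP] eta_lift_eq[OF h l] eta_lift_eq[OF L_mult[OF g h] l] eta_lift_eq[OF g L_mult[OF h l]]
    unfolding act_cobd_c_lift[OF g h lP]
    unfolding cobd_c_lift_def as z_apply
    by (simp only: mod_norm, rule mod_eq_by_comb1[OF coc, of _ _ 1], simp add: algebra_simps)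
qed

lemma conn_on_subgroup:
  assumes g: "g \<in> L" and h: "h \<in> L" and l: "l \<in> L"
  shows "conn P p d m act x etax g h l = cobd2 P (Tmod p d act) defect_quot g h l"
proof -
  have e: "(\<lambda>a b. liftM p (etax a b)) = eta_lift" by (simp add: eta_lift_def fun_eq_iff)
  have "zdivp p d kk (cobd2 P (Tmod p d act) eta_lift g h l) = cobd2 P (Tmod p d act) defect_quot g h l"
  proof (rule zdivp_eq[OF p_pos])
    show "cobd2 P (Tmod p d act) defect_quot g h l \<in> Zpd p d" using g h l L_carrier by (simp add: cobd2_T)
    show "zsmul p (int p ^ kk) (cobd2 P (Tmod p d act) defect_quot g h l) = cobd2 P (Tmod p d act) eta_lift g h l"
      using cobd2_eta_lift[OF g h l] by simp
  qed
  then show ?thesis using g h l L_carrier unfolding conn_def e by simp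
qed

lemma etax_one: "etax \<one>\<^bsub>P\<^esub> g = mzero (M kk)" "etax g \<one>\<^bsub>P\<^esub> = mzero (M kk)"
  using Z2_D(2,3)[OF etax_Z2] by auto

lemma c_lift_one: "c_lift \<one>\<^bsub>P\<^esub> = (\<lambda>i n. 0)"
  by (simp add: c_lift_def cf_one liftM_def mzero_apply fun_eq_iff)

lemma defect_one: "h \<in> L \<Longrightarrow> defect \<one>\<^bsub>P\<^esub> h = (\<lambda>i n. 0)" "h \<in> L \<Longrightarrow> defect h \<one>\<^bsub>P\<^esub> = (\<lambda>i n. 0)"
proof -
  assume h: "h \<in> L"
  have hP: "h \<in> carrier P" using L_carrier[OF h] .
  show "defect \<one>\<^bsub>P\<^esub> h = (\<lambda>i n. 0)"
    unfolding defect_def cobd_c_lift_def eta_lift_def using hP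
    by (simp add: rho_one etax_one c_lift_one act_zero fun_eq_iff z_apply liftM_def mzero_apply mod_norm)
  show "defect h \<one>\<^bsub>P\<^esub> = (\<lambda>i n. 0)"
    unfolding defect_def cobd_c_lift_def eta_lift_def using hP h
    by (simp add: rho_one etax_one c_lift_one fun_eq_iff z_apply liftM_def mzero_apply mod_norm)
qed

lemma defect_quot_one: "defect_quot \<one>\<^bsub>P\<^esub> h = (\<lambda>i n. 0)" "defect_quot h \<one>\<^bsub>P\<^esub> = (\<lambda>i n. 0)"
proof -
  have z: "zsmul p (int p ^ kk) (\<lambda>i n. 0) = (\<lambda>i n. 0)" by (simp add: zsmul_def)
  show "defect_quot \<one>\<^bsub>P\<^esub> h = (\<lambda>i n. 0)"
  proof (cases "h \<in> L")
    case True
    then show ?thesis using defect_eq[of "\<one>\<^bsub>P\<^esub>" h] defect_one(1)[OF True] z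
      by (intro zsmul_pow_cancel[OF p_pos defect_quot_Zpd zero_Zpd[OF p_pos], of kk]) simp_all
  qed (simp add: defect_quot_def)
  show "defect_quot h \<one>\<^bsub>P\<^esub> = (\<lambda>i n. 0)"
  proof (cases "h \<in> L")
    case True
    then show ?thesis using defect_eq[of h "\<one>\<^bsub>P\<^esub>"] defect_one(2)[OF True] z
      by (intro zsmul_pow_cancel[OF p_pos defect_quot_Zpd zero_Zpd[OF p_pos], of kk]) simp_all
  qed (simp add: defect_quot_def)
qed

lemma res3_eta_eq_cobd2:
  assumes b: "b \<in> cochain2 P (carrier P) (Tmod p d act)"
    and bq: "\<And>g h l. g \<in> carrier P \<Longrightarrow> h \<in> carrier P \<Longrightarrow> l \<in> carrier P \<Longrightarrow>
      msub (Tmod p d act) (conn P p d m act x etax g h l) (eta g h l) = cobd2 P (Tmod p d act) b g h l"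
    and g: "g \<in> L" and h: "h \<in> L" and l: "l \<in> L"
  defines "c2 \<equiv> \<lambda>g h. if g \<in> L \<and> h \<in> L then zadd p (defect_quot g h) (zneg p (b g h)) else (\<lambda>i n. 0)"
  shows "res3 L (Tmod p d act) eta g h l = cobd2 P (Tmod p d act) c2 g h l"
proof (rule Zpd_eqI)
  have bZ: "g \<in> carrier P \<Longrightarrow> h \<in> carrier P \<Longrightarrow> b g h \<in> Zpd p d" for g h
    using b unfolding cochain2_def by auto
  have etaZ: "g \<in> carrier P \<Longrightarrow> h \<in> carrier P \<Longrightarrow> l \<in> carrier P \<Longrightarrow> eta g h l \<in> Zpd p d" for g h l
    using eta unfolding Z3_def cochain3_def by auto
  note gP = L_carrier[OF g] and hP = L_carrier[OF h] and lP = L_carrier[OF l]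
  show "res3 L (Tmod p d act) eta g h l \<in> Zpd p d" using g h l gP hP lP etaZ by (simp add: res3_def)
  show "cobd2 P (Tmod p d act) c2 g h l \<in> Zpd p d" using g h l gP hP lP bZ by (simp add: cobd2_T c2_def)
  fix i n
  have cbZ: "cobd2 P (Tmod p d act) b g h l \<in> Zpd p d" using gP hP lP bZ by (simp add: cobd2_T)
  have hb: "(cobd2 P (Tmod p d act) defect_quot g h l i n + - eta g h l i n) mod int p ^ n
      = cobd2 P (Tmod p d act) b g h l i n mod int p ^ n"
    using fun_cong[OF fun_cong[OF bq[OF gP hP lP], of i], of n] Zpd_mod_self[OF cbZ, of i n]
    unfolding msub_T conn_on_subgroup[OF g h l] z_apply by (simp add: mod_norm)
  have e1: "act (c2 g h) l = zadd p (act (defect_quot g h) l) (zneg p (act (b g h) l))"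
    using g h gP hP lP bZ by (simp add: c2_def act_zadd act_zneg)
  have e2: "c2 h l = zadd p (defect_quot h l) (zneg p (b h l))"
    "c2 (g \<otimes>\<^bsub>P\<^esub> h) l = zadd p (defect_quot (g \<otimes>\<^bsub>P\<^esub> h) l) (zneg p (b (g \<otimes>\<^bsub>P\<^esub> h) l))"
    "c2 g (h \<otimes>\<^bsub>P\<^esub> l) = zadd p (defect_quot g (h \<otimes>\<^bsub>P\<^esub> l)) (zneg p (b g (h \<otimes>\<^bsub>P\<^esub> l)))"
    using g h l by (simp_all add: c2_def)
  have e3: "res3 L (Tmod p d act) eta g h l = eta g h l" using g h l by (simp add: res3_def)
  show "res3 L (Tmod p d act) eta g h l i n mod int p ^ n = cobd2 P (Tmod p d act) c2 g h l i n mod int p ^ n"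
    using hb unfolding e3 cobd2_T e1 e2 z_apply
    apply (simp only: mod_norm)
    apply (erule mod_eq_by_comb1[of _ _ _ _ _ "-1"])
    apply (simp add: algebra_simps)
    done
qed

lemma eta_B3: "res3 L (Tmod p d act) eta \<in> B3 P L (Tmod p d act)"
proof -
  obtain b where b: "b \<in> cochain2 P (carrier P) (Tmod p d act)"
    and bq: "\<And>g h l. g \<in> carrier P \<Longrightarrow> h \<in> carrier P \<Longrightarrow> l \<in> carrier P \<Longrightarrow>
      msub (Tmod p d act) (conn P p d m act x etax g h l) (eta g h l) = cobd2 P (Tmod p d act) b g h l"
    using etax_eta unfolding B3_def by blast
  define c2 where "c2 g h = (if g \<in> L \<and> h \<in> L then zadd p (defect_quot g h) (zneg p (b g h)) else (\<lambda>i n. 0))" for g h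
  have bZ: "g \<in> carrier P \<Longrightarrow> h \<in> carrier P \<Longrightarrow> b g h \<in> Zpd p d" for g h
    using b unfolding cochain2_def by auto
  have b1: "b \<one>\<^bsub>P\<^esub> h = (\<lambda>i n. 0)" "b h \<one>\<^bsub>P\<^esub> = (\<lambda>i n. 0)" for h
    using b unfolding cochain2_def by auto
  have c2C: "c2 \<in> cochain2 P L (Tmod p d act)"
    unfolding cochain2_def
  proof (intro CollectI conjI allI ballI impI)
    show "c2 g h \<in> mcar (Tmod p d act)" if "g \<in> L" "h \<in> L" for g h
      using that L_carrier bZ by (simp add: c2_def)
    show "c2 g h = mzero (Tmod p d act)" if "g \<notin> L \<or> h \<notin> L" for g h
      using that by (auto simp: c2_def)
    show "c2 \<one>\<^bsub>P\<^esub> g = mzero (Tmod p d act)" "c2 g \<one>\<^bsub>P\<^esub> = mzero (Tmod p d act)" for g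
      by (simp_all add: c2_def defect_quot_one b1 zadd_def zneg_def)
  qed
  have r3C: "res3 L (Tmod p d act) eta \<in> cochain3 P L (Tmod p d act)"
    using eta L_carrier unfolding Z3_def cochain3_def res3_def by auto
  have "res3 L (Tmod p d act) eta g h l = cobd2 P (Tmod p d act) c2 g h l" if "g \<in> L" "h \<in> L" "l \<in> L" for g h l
    using res3_eta_eq_cobd2[OF b bq that] unfolding c2_def by (simp add: fun_eq_iff)
  then show ?thesis unfolding B3_def using r3C c2C by blast
qed

(* eta_x \<in> J: eta_x is p^(kk - m) eta_J modulo p^kk, and its lift differs from that by
   p^kk eta_J_err. *)
definition "eta_J g h = (SOME t. t \<in> Zpd p d \<and> etax g h = trunc kk (zsmul p (int p ^ (kk - m)) t))"

lemma eta_J_prop: "eta_J g h \<in> Zpd p d \<and> etax g h = trunc kk (zsmul p (int p ^ (kk - m)) (eta_J g h))"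
proof -
  have "etax g h \<in> trunc kk ` {zsmul p (int p ^ (kk - m)) t | t. t \<in> Zpd p d}"
    using etaxJ unfolding Jc_def by blast
  then have "\<exists>t. t \<in> Zpd p d \<and> etax g h = trunc kk (zsmul p (int p ^ (kk - m)) t)" by blast
  then show ?thesis unfolding eta_J_def by (rule someI_ex)
qed

lemma eta_J_Zpd[simp]: "eta_J g h \<in> Zpd p d" using eta_J_prop by blast

definition "eta_J_err g h = zquot p kk (zadd p (eta_lift g h) (zneg p (zsmul p (int p ^ (kk - m)) (eta_J g h))))"

lemma eta_J_err_prop:
  assumes g: "g \<in> carrier P" and h: "h \<in> carrier P"
  shows "eta_J_err g h \<in> Zpd p d \<and> eta_lift g h = zadd p (zsmul p (int p ^ (kk - m)) (eta_J g h)) (zsmul p (int p ^ kk) (eta_J_err g h))"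
proof -
  let ?y = "zsmul p (int p ^ (kk - m)) (eta_J g h)"
  define v where "v = zadd p (eta_lift g h) (zneg p ?y)"
  have yZ: "?y \<in> Zpd p d" by simp
  have vZ: "v \<in> Zpd p d" unfolding v_def using g h by simp
  have "eta_lift g h i kk = ?y i kk" for i
  proof -
    have "eta_lift g h i kk = etax g h i mod int p ^ kk" by (simp add: eta_lift_def liftM_def)
    also have "\<dots> = ?y i kk mod int p ^ kk" using eta_J_prop[of g h] by (simp add: trunc_def)
    also have "\<dots> = ?y i kk" using Zpd_mod_self[OF yZ] by blast
    finally show ?thesis .
  qed
  then have "v i kk = 0" for i unfolding v_def z_apply by (simp add: mod_norm)
  note s = Zpd_div_pow[OF p_pos vZ this, unfolded v_def, folded eta_J_err_def]
  have "eta_lift g h = zadd p ?y (zsmul p (int p ^ kk) (eta_J_err g h))"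
  proof (rule Zpd_eqI)
    show "eta_lift g h \<in> Zpd p d" using g h by simp
    show "zadd p ?y (zsmul p (int p ^ kk) (eta_J_err g h)) \<in> Zpd p d" using s by simp
    fix i n
    show "eta_lift g h i n mod int p ^ n = zadd p ?y (zsmul p (int p ^ kk) (eta_J_err g h)) i n mod int p ^ n"
      unfolding s(2)[symmetric] z_apply by (simp add: mod_norm)
  qed
  then show ?thesis using s by blast
qed

(* (p^kk defect_quot - eta_lift) / p^(kk - m), computed from the decomposition of eta_lift;
   it equals (rho + \<delta>c_lift) / p^(kk - m). *)
definition "ucoc g h = (if g \<in> L \<and> h \<in> L then zadd p (zsmul p (int p ^ m) (defect_quot g h))
   (zneg p (zadd p (eta_J g h) (zsmul p (int p ^ m) (eta_J_err g h)))) else (\<lambda>i n. 0))"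

lemma ucoc_Zpd[simp]: "ucoc g h \<in> Zpd p d"
  using eta_J_err_prop[of g h] L_carrier by (auto simp: ucoc_def)

lemma pow_kk_split: "int p ^ kk = int p ^ (kk - m) * int p ^ m"
proof -
  have "int p ^ (kk - m) * int p ^ m = int p ^ (kk - m + m)" by (simp only: power_add)
  moreover have "kk - m + m = kk" by simp
  ultimately show ?thesis by metis
qed

lemma ucoc_scaled:
  assumes g: "g \<in> L" and h: "h \<in> L"
  shows "zsmul p (int p ^ (kk - m)) (ucoc g h) = zadd p (rho g h) (cobd_c_lift g h)"
proof (rule Zpd_eqI)
  note gP = L_carrier[OF g] and hP = L_carrier[OF h]
  show "zsmul p (int p ^ (kk - m)) (ucoc g h) \<in> Zpd p d" by simp
  show "zadd p (rho g h) (cobd_c_lift g h) \<in> Zpd p d" using g h gP hP by simp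
  fix i n
  have h1: "(rho g h i n + eta_lift g h i n + cobd_c_lift g h i n) mod int p ^ n = (int p ^ (kk - m) * int p ^ m * defect_quot g h i n) mod int p ^ n"
    using fun_cong[OF fun_cong[OF defect_eq[OF g h], of i], of n] unfolding defect_def z_apply pow_kk_split by (simp add: mod_norm)
  have h2: "eta_lift g h i n mod int p ^ n = (int p ^ (kk - m) * eta_J g h i n + int p ^ (kk - m) * int p ^ m * eta_J_err g h i n) mod int p ^ n"
    using fun_cong[OF fun_cong[OF conjunct2[OF eta_J_err_prop[OF gP hP]], of i], of n] unfolding z_apply pow_kk_split by (simp add: mod_norm)
  show "zsmul p (int p ^ (kk - m)) (ucoc g h) i n mod int p ^ n = zadd p (rho g h) (cobd_c_lift g h) i n mod int p ^ n"
    unfolding ucoc_def using g h unfolding z_apply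
    apply (simp only: mod_norm if_True conj_absorb simp_thms)
    apply (rule mod_eq_by_comb2[OF h1 h2, of _ _ "-1" 1])
    apply (simp add: algebra_simps)
    done
qed

lemma ucoc_scaled_apply:
  assumes g: "g \<in> L" and h: "h \<in> L"
  shows "(int p ^ (kk - m) * ucoc g h i n) mod int p ^ n =
    (rho g h i n + c_lift h i n + - c_lift (g \<otimes>\<^bsub>P\<^esub> h) i n + act (c_lift g) h i n) mod int p ^ n"
  using fun_cong[OF fun_cong[OF ucoc_scaled[OF g h], of i], of n] unfolding cobd_c_lift_def z_apply
  by (simp add: mod_norm ac_simps)

lemma ucoc_scaled_act:
  assumes g: "g \<in> L" and h: "h \<in> L" and l: "l \<in> carrier P"
  shows "(int p ^ (kk - m) * act (ucoc g h) l i n) mod int p ^ n =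
    (act (rho g h) l i n + act (c_lift h) l i n + - act (c_lift (g \<otimes>\<^bsub>P\<^esub> h)) l i n + act (c_lift g) (h \<otimes>\<^bsub>P\<^esub> l) i n) mod int p ^ n"
proof -
  have "act (zsmul p (int p ^ (kk - m)) (ucoc g h)) l = act (zadd p (rho g h) (cobd_c_lift g h)) l"
    using ucoc_scaled[OF g h] by simp
  then have "zsmul p (int p ^ (kk - m)) (act (ucoc g h) l) = zadd p (act (rho g h) l) (act (cobd_c_lift g h) l)"
    using g h l L_carrier by (simp add: act_zsmul act_zadd)
  from fun_cong[OF fun_cong[OF this, of i], of n] show ?thesis
    unfolding act_cobd_c_lift[OF g h l] z_apply by (simp add: mod_norm ac_simps)
qed

(* p^(kk - m) \<delta>ucoc = \<delta>rho + \<delta>\<delta>c_lift = 0, and T is torsion free. *)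
lemma cobd2_ucoc:
  assumes g: "g \<in> L" and h: "h \<in> L" and l: "l \<in> L"
  shows "cobd2 P (Tmod p d act) ucoc g h l = (\<lambda>i n. 0)"
proof (rule zsmul_pow_cancel[OF p_pos, of _ d _ "kk - m"])
  note gP = L_carrier[OF g] and hP = L_carrier[OF h] and lP = L_carrier[OF l]
  show "cobd2 P (Tmod p d act) ucoc g h l \<in> Zpd p d" using gP hP lP by (simp add: cobd2_T)
  show "(\<lambda>i n. 0) \<in> Zpd p d" by simp
  have z: "zsmul p (int p ^ (kk - m)) (\<lambda>i n. 0) = (\<lambda>i n. 0)" by (simp add: zsmul_def)
  show "zsmul p (int p ^ (kk - m)) (cobd2 P (Tmod p d act) ucoc g h l) = zsmul p (int p ^ (kk - m)) (\<lambda>i n. 0)"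
    unfolding z
  proof (rule Zpd_eqI)
    show "zsmul p (int p ^ (kk - m)) (cobd2 P (Tmod p d act) ucoc g h l) \<in> Zpd p d" using gP hP lP by (simp add: cobd2_T)
    show "(\<lambda>i n. 0) \<in> Zpd p d" by simp
    fix i n
    have as: "g \<otimes>\<^bsub>P\<^esub> h \<otimes>\<^bsub>P\<^esub> l = g \<otimes>\<^bsub>P\<^esub> (h \<otimes>\<^bsub>P\<^esub> l)" using P_assoc gP hP lP by blast
    have coc: "(act (rho g h) l i n + rho (g \<otimes>\<^bsub>P\<^esub> h) l i n) mod int p ^ n = (rho h l i n + rho g (h \<otimes>\<^bsub>P\<^esub> l) i n) mod int p ^ n"
      using fun_cong[OF fun_cong[OF rho_cocycle_eq[OF gP hP lP], of i], of n] by (simp add: z_apply)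
    note hA1 = ucoc_scaled_apply[OF h l, of i n]
    note hA2 = ucoc_scaled_apply[OF L_mult[OF g h] l, of i n, unfolded as]
    note hA3 = ucoc_scaled_apply[OF g L_mult[OF h l], of i n]
    note hA4 = ucoc_scaled_act[OF g h lP, of i n]
    show "zsmul p (int p ^ (kk - m)) (cobd2 P (Tmod p d act) ucoc g h l) i n mod int p ^ n = (\<lambda>i n. 0) i n mod int p ^ n"
      unfolding cobd2_T z_apply
      apply (simp only: mod_norm)
      apply (rule mod_eq_by_comb5[OF hA1 hA2 hA3 hA4 coc, of _ _ 1 "-1" 1 "-1" "-1"])
      apply (simp add: algebra_simps)
      done
  qed
qed

lemma finite_L: "finite L" using finite_subset[OF subgroup.subset[OF Lsub] P_fin] .

definition "ucoc_avg y = zsum L (\<lambda>g. ucoc g y)"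

lemma ucoc_avg_Zpd[simp]: "ucoc_avg y \<in> Zpd p d" unfolding ucoc_avg_def by simp

lemma act_ucoc_avg: "l \<in> carrier P \<Longrightarrow> act (ucoc_avg y) l = zsum L (\<lambda>g. act (ucoc g y) l)"
  unfolding ucoc_avg_def by (rule act_zsum[OF finite_L]) auto

lemma cobd2_ucoc_apply:
  assumes g: "g \<in> L" and h: "h \<in> L" and l: "l \<in> L"
  shows "(ucoc h l i n + - ucoc (g \<otimes>\<^bsub>P\<^esub> h) l i n + ucoc g (h \<otimes>\<^bsub>P\<^esub> l) i n + - act (ucoc g h) l i n) mod int p ^ n = 0"
  using fun_cong[OF fun_cong[OF cobd2_ucoc[OF g h l], of i], of n] unfolding cobd2_T z_apply
  by (simp add: mod_norm)

lemma L_right_mult_bij: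
  assumes h: "h \<in> L"
  shows "bij_betw (\<lambda>g. g \<otimes>\<^bsub>P\<^esub> h) L L"
proof (rule bij_betwI[where g = "\<lambda>g. g \<otimes>\<^bsub>P\<^esub> inv\<^bsub>P\<^esub> h"])
  have hP: "h \<in> carrier P" using L_carrier[OF h] .
  have ih: "inv\<^bsub>P\<^esub> h \<in> L" using subgroup.m_inv_closed[OF Lsub h] .
  show "(\<lambda>g. g \<otimes>\<^bsub>P\<^esub> h) \<in> L \<rightarrow> L" using h by auto
  show "(\<lambda>g. g \<otimes>\<^bsub>P\<^esub> inv\<^bsub>P\<^esub> h) \<in> L \<rightarrow> L" using ih by auto
  show "g \<otimes>\<^bsub>P\<^esub> h \<otimes>\<^bsub>P\<^esub> inv\<^bsub>P\<^esub> h = g" if "g \<in> L" for g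
    using L_carrier[OF that] hP by (simp add: P_assoc group.r_inv[OF P_group])
  show "g \<otimes>\<^bsub>P\<^esub> inv\<^bsub>P\<^esub> h \<otimes>\<^bsub>P\<^esub> h = g" if "g \<in> L" for g
    using L_carrier[OF that] hP by (simp add: P_assoc)
qed

(* Sum the cocycle identity for ucoc over g \<in> L; g \<mapsto> g h permutes L. *)
lemma ucoc_averaging:
  assumes h: "h \<in> L" and l: "l \<in> L"
  shows "(int (card L) * ucoc h l i n) mod int p ^ n =
    ((\<Sum>g\<in>L. ucoc g l i n) - (\<Sum>g\<in>L. ucoc g (h \<otimes>\<^bsub>P\<^esub> l) i n) + (\<Sum>g\<in>L. act (ucoc g h) l i n)) mod int p ^ n"
proof -
  have s0: "(\<Sum>g\<in>L. ucoc h l i n + - ucoc (g \<otimes>\<^bsub>P\<^esub> h) l i n + ucoc g (h \<otimes>\<^bsub>P\<^esub> l) i n + - act (ucoc g h) l i n) mod int p ^ n = 0"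
  proof -
    have "(\<Sum>g\<in>L. ucoc h l i n + - ucoc (g \<otimes>\<^bsub>P\<^esub> h) l i n + ucoc g (h \<otimes>\<^bsub>P\<^esub> l) i n + - act (ucoc g h) l i n) mod int p ^ n
      = (\<Sum>g\<in>L. (ucoc h l i n + - ucoc (g \<otimes>\<^bsub>P\<^esub> h) l i n + ucoc g (h \<otimes>\<^bsub>P\<^esub> l) i n + - act (ucoc g h) l i n) mod int p ^ n) mod int p ^ n"
      by (simp only: mod_sum_eq)
    also have "\<dots> = 0" using cobd2_ucoc_apply[OF _ h l] by simp
    finally show ?thesis .
  qed
  have re: "(\<Sum>g\<in>L. ucoc (g \<otimes>\<^bsub>P\<^esub> h) l i n) = (\<Sum>g\<in>L. ucoc g l i n)"
    using sum.reindex_bij_betw[OF L_right_mult_bij[OF h], of "\<lambda>g. ucoc g l i n"] .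
  have "(\<Sum>g\<in>L. ucoc h l i n + - ucoc (g \<otimes>\<^bsub>P\<^esub> h) l i n + ucoc g (h \<otimes>\<^bsub>P\<^esub> l) i n + - act (ucoc g h) l i n)
      = int (card L) * ucoc h l i n - (\<Sum>g\<in>L. ucoc g l i n) + (\<Sum>g\<in>L. ucoc g (h \<otimes>\<^bsub>P\<^esub> l) i n) - (\<Sum>g\<in>L. act (ucoc g h) l i n)"
    by (simp add: sum.distrib sum_subtractf re)
  then have "(int (card L) * ucoc h l i n - (\<Sum>g\<in>L. ucoc g l i n) + (\<Sum>g\<in>L. ucoc g (h \<otimes>\<^bsub>P\<^esub> l) i n) - (\<Sum>g\<in>L. act (ucoc g h) l i n)) mod int p ^ n = 0 mod int p ^ n"
    using s0 by simp
  then show ?thesis by (rule mod_eq_by_comb1[of _ _ _ _ _ 1]) (simp add: algebra_simps)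
qed

lemma ucoc_one: "ucoc g \<one>\<^bsub>P\<^esub> = (\<lambda>i n. 0)"
proof (cases "g \<in> L")
  case True
  have gP: "g \<in> carrier P" using L_carrier[OF True] .
  have z: "zsmul p (int p ^ (kk - m)) (\<lambda>i n. 0) = (\<lambda>i n. 0)" by (simp add: zsmul_def)
  have "zadd p (rho g \<one>\<^bsub>P\<^esub>) (cobd_c_lift g \<one>\<^bsub>P\<^esub>) = (\<lambda>i n. 0)"
    unfolding cobd_c_lift_def using gP True by (simp add: rho_one c_lift_one fun_eq_iff z_apply mod_norm)
  then have "zsmul p (int p ^ (kk - m)) (ucoc g \<one>\<^bsub>P\<^esub>) = zsmul p (int p ^ (kk - m)) (\<lambda>i n. 0)"
    using ucoc_scaled[OF True L_one] z by simp
  then show ?thesis by (rule zsmul_pow_cancel[OF p_pos ucoc_Zpd zero_Zpd[OF p_pos]])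
qed (simp add: ucoc_def)

lemma ucoc_avg_one: "ucoc_avg \<one>\<^bsub>P\<^esub> = (\<lambda>i n. 0)"
  by (simp add: ucoc_avg_def zsum_def ucoc_one)

definition "avg_factor = int p ^ (kk - 2 * m) * int (card (rcosets\<^bsub>P\<^esub> L))"

lemma pow_eq_avg_factor_card: "int p ^ (kk - m) = avg_factor * int (card L)"
proof -
  have lag: "card (rcosets\<^bsub>P\<^esub> L) * card L = p ^ m"
    using group.lagrange[OF P_group Lsub] Pord by (simp add: order_def)
  have "kk - m = (kk - 2 * m) + m" by simp
  then have "int p ^ (kk - m) = int p ^ (kk - 2 * m) * int p ^ m" by (metis power_add)
  also have "int p ^ m = int (card (rcosets\<^bsub>P\<^esub> L)) * int (card L)" using lag by (metis of_nat_mult of_nat_power)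
  finally show ?thesis unfolding avg_factor_def by (simp add: ac_simps)
qed

(* |L| ucoc is a coboundary by averaging, and p^(kk - m) is a multiple of |L|; so
   rho = p^(kk - m) ucoc - \<delta>c_lift is the coboundary of rho_prim on L. *)
definition "rho_prim y = (if y \<in> L then zadd p (zsmul p avg_factor (ucoc_avg y)) (zneg p (c_lift y)) else (\<lambda>i n. 0))"

lemma rho_eq_cobd1:
  assumes g: "g \<in> L" and h: "h \<in> L"
  shows "res2 L (Tmod p d act) rho g h = cobd1 P (Tmod p d act) rho_prim g h"
proof (rule Zpd_eqI)
  note gP = L_carrier[OF g] and hP = L_carrier[OF h]
  show "res2 L (Tmod p d act) rho g h \<in> Zpd p d" using g h gP hP by (simp add: res2_def)
  show "cobd1 P (Tmod p d act) rho_prim g h \<in> Zpd p d" using g h gP hP by (simp add: cobd1_T rho_prim_def)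
  fix i n
  note hA = ucoc_scaled_apply[OF g h, of i n, unfolded pow_eq_avg_factor_card]
  note hC = ucoc_averaging[OF g h, of i n]
  have e1: "rho_prim h = zadd p (zsmul p avg_factor (ucoc_avg h)) (zneg p (c_lift h))"
    "rho_prim (g \<otimes>\<^bsub>P\<^esub> h) = zadd p (zsmul p avg_factor (ucoc_avg (g \<otimes>\<^bsub>P\<^esub> h))) (zneg p (c_lift (g \<otimes>\<^bsub>P\<^esub> h)))"
    "act (rho_prim g) h = zadd p (zsmul p avg_factor (zsum L (\<lambda>x. act (ucoc x g) h))) (zneg p (act (c_lift g) h))"
    using g h gP hP by (simp_all add: rho_prim_def act_zadd act_zneg act_zsmul act_ucoc_avg)
  have e2: "res2 L (Tmod p d act) rho g h = rho g h" using g h by (simp add: res2_def)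
  show "res2 L (Tmod p d act) rho g h i n mod int p ^ n = cobd1 P (Tmod p d act) rho_prim g h i n mod int p ^ n"
    unfolding e2 cobd1_T e1 ucoc_avg_def zsum_def z_apply
    apply (simp only: mod_norm)
    apply (rule mod_eq_by_comb2[OF hA hC, of _ _ "-1" avg_factor])
    apply (simp add: algebra_simps)
    done
qed

lemma rho_B2: "res2 L (Tmod p d act) rho \<in> B2 P L (Tmod p d act)"
proof -
  have "rho_prim \<in> cochain1 P L (Tmod p d act)"
    unfolding cochain1_def
  proof (intro CollectI conjI allI ballI impI)
    show "rho_prim g \<in> mcar (Tmod p d act)" if "g \<in> L" for g using that by (simp add: rho_prim_def)
    show "rho_prim g = mzero (Tmod p d act)" if "g \<notin> L" for g using that by (simp add: rho_prim_def)
    show "rho_prim \<one>\<^bsub>P\<^esub> = mzero (Tmod p d act)"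
      by (simp add: rho_prim_def ucoc_avg_one c_lift_one zadd_def zneg_def zsmul_def)
  qed
  moreover have "res2 L (Tmod p d act) rho \<in> cochain2 P L (Tmod p d act)"
    unfolding cochain2_def res2_def using L_carrier by (auto simp: rho_one)
  ultimately show ?thesis unfolding B2_def using rho_eq_cobd1 by blast
qed

end

section \<open>The elementary abelian subgroups of G_x\<close>

locale coclass_member = twisted_ext P p d act "x + 3 * m"
    "\<lambda>g h. madd (Mmod p d (x + 3 * m) act) (trunc (x + 3 * m) (rho g h)) (etax g h)"
  for P :: "'g monoid" and p d act m x rho etax +
  fixes eta and tL :: "'g set \<Rightarrow> 'g \<Rightarrow> (nat \<Rightarrow> int)"
  assumes Pord: "card (carrier P) = p ^ m"
    and rho: "rho \<in> Z2 P (carrier P) (Tmod p d act)"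
    and eta: "eta \<in> Z3 P (carrier P) (Tmod p d act)"
    and etaxJ: "etax \<in> Jc P p d m act x"
    and etax_eta: "(\<lambda>g h k. msub (Tmod p d act) (conn P p d m act x etax g h k) (eta g h k))
                     \<in> B3 P (carrier P) (Tmod p d act)"
    and tL_compl: "\<forall>L\<in>Leta P p d act rho eta.
                     (\<forall>l\<in>L. tL L l \<in> mcar (Mx p d m act x))
                     \<and> subgroup (CL p d m act x (tL L) (\<lambda>_. mzero (Mx p d m act x)) L)
                                 (Gx P p d m act rho etax x)"
begin

abbreviation "kk \<equiv> x + 3 * m"
abbreviation "\<tau>x \<equiv> \<lambda>g h. madd (M kk) (trunc kk (rho g h)) (etax g h)"
abbreviation "N \<equiv> {\<one>\<^bsub>P\<^esub>} \<times> mcar (M kk)"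

interpretation Gg: group G by (rule group_G)

lemma Mx_eq: "Mx p d m act x = M kk"
  by (simp add: Mx_def)

lemma Gx_eq: "Gx P p d m act rho etax x = G"
  by (simp add: Gx_def Mx_def)

lemma CL_eq: "CL p d m act x t \<gamma> L = (\<lambda>l. (l, madd (M kk) (t l) (\<gamma> l))) ` L"
  unfolding CL_def Mx_eq by blast

lemma Leta_elem_ab: "L \<in> Leta P p d act rho eta \<Longrightarrow> elem_ab p P L"
  unfolding Leta_def Lcal_def by blast

lemma Leta_subset: "L \<in> Leta P p d act rho eta \<Longrightarrow> L \<subseteq> carrier P"
  using Leta_elem_ab subgroup.subset unfolding elem_ab_def by blast

lemma Ox_iff: "Q \<in> Ox P p d m act rho etax x L \<longleftrightarrow>
    Q \<subseteq> N \<and> elem_ab p G Q \<and> (\<forall>l\<in>L. \<forall>u. (\<one>\<^bsub>P\<^esub>, u) \<in> Q \<longrightarrow> mact (M kk) u l = u)"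
  unfolding Ox_def Mx_eq Gx_eq by blast

lemma Cx_iff: "Y \<in> Cx P p d m act rho etax x t L \<longleftrightarrow>
    (\<exists>\<gamma> Q. Y = ((\<lambda>l. (l, madd (M kk) (t l) (\<gamma> l))) ` L) <#>\<^bsub>G\<^esub> Q
       \<and> \<gamma> \<in> Z1 P L (M kk) \<and> Q \<in> Ox P p d m act rho etax x L)"
  unfolding Cx_def CL_eq Gx_eq Mx_eq by blast

lemma tL_twisted_cocycle:
  assumes L: "L \<in> Leta P p d act rho eta"
  shows "twisted_cocycle P L (M kk) \<tau>x (tL L)"
proof -
  have tM: "\<forall>l\<in>L. tL L l \<in> mcar (M kk)"
    and sub: "subgroup (CL p d m act x (tL L) (\<lambda>_. mzero (Mx p d m act x)) L) G"
    using tL_compl L unfolding Mx_eq Gx_eq by auto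
  have "madd (M kk) (tL L l) (mzero (M kk)) = tL L l" if "l \<in> L" for l
    using tM that by (simp add: fun_eq_iff madd_apply mzero_apply mcar_mod_self)
  then have graph: "CL p d m act x (tL L) (\<lambda>_. mzero (Mx p d m act x)) L = (\<lambda>l. (l, tL L l)) ` L"
    unfolding CL_eq Mx_eq by (auto simp: image_iff)
  have "\<one>\<^bsub>G\<^esub> \<in> (\<lambda>l. (l, tL L l)) ` L" using subgroup.one_closed[OF sub] graph by simp
  then have "tL L \<one>\<^bsub>P\<^esub> = mzero (M kk)" by (auto simp: ext_one)
  moreover have "tL L (l \<otimes>\<^bsub>P\<^esub> l') = madd (M kk) (madd (M kk) (mact (M kk) (tL L l) l') (tL L l')) (\<tau>x l l')"
    if "l \<in> L" "l' \<in> L" for l l'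
  proof -
    have "(l, tL L l) \<otimes>\<^bsub>G\<^esub> (l', tL L l') \<in> (\<lambda>l. (l, tL L l)) ` L"
      using subgroup.m_closed[OF sub] graph that by auto
    then show ?thesis by (auto simp: ext_mult)
  qed
  ultimately show ?thesis
    unfolding twisted_cocycle_def using tM by blast
qed

lemma elem_ab_in_Cx:
  assumes E: "elem_ab p G E"
  shows "fst ` E \<in> Leta P p d act rho eta \<and> E \<in> Cx P p d m act rho etax x (tL (fst ` E)) (fst ` E)"
proof -
  let ?L = "fst ` E"
  obtain c where c: "twisted_cocycle P ?L (M kk) \<tau>x c"
    and decomp: "E = ((\<lambda>l. (l, c l)) ` ?L) <#>\<^bsub>G\<^esub> (E \<inter> N)"
    using elem_ab_decomposition[OF E] by blast
  have Lab: "elem_ab p P ?L" by (rule elem_ab_fst_image[OF E])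
  then have Lsub: "subgroup ?L P" unfolding elem_ab_def by blast
  interpret S: splitting_subgroup P p d act ?L c rho eta etax m x
    by (rule splitting_subgroup.intro[OF padic_module_axioms
          splitting_subgroup_axioms.intro[OF rho eta etaxJ etax_eta Pord P_fin Lsub c]])
  have L: "?L \<in> Leta P p d act rho eta"
    unfolding Leta_def Lcal_def using Lab S.rho_B2 S.eta_B3 by blast
  note t = tL_twisted_cocycle[OF L]
  define \<gamma> where "\<gamma> l = (if l \<in> ?L then madd (M kk) (c l) (mneg (M kk) (tL ?L l)) else mzero (M kk))" for l
  have \<gamma>: "\<gamma> \<in> Z1 P ?L (M kk)"
    unfolding \<gamma>_def by (rule twisted_cocycle_diff[OF Lsub t c])
  have "madd (M kk) (tL ?L l) (\<gamma> l) = c l" if "l \<in> ?L" for l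
    using that twisted_cocycleD(1)[OF c that] by (simp add: \<gamma>_def fun_eq_iff madd_apply mneg_apply mod_norm mcar_mod_self)
  then have graph: "(\<lambda>l. (l, madd (M kk) (tL ?L l) (\<gamma> l))) ` ?L = (\<lambda>l. (l, c l)) ` ?L"
    by (auto simp: image_iff)
  have "E \<inter> N \<in> Ox P p d m act rho etax x ?L"
    unfolding Ox_iff
  proof (intro conjI ballI allI impI)
    show "elem_ab p G (E \<inter> N)"
      using E Gg.subgroups_Inter_pair[OF _ kernel_subgroup] unfolding elem_ab_def by blast
    show "mact (M kk) u l = u" if "l \<in> ?L" "(\<one>\<^bsub>P\<^esub>, u) \<in> E \<inter> N" for l u
      using that elem_ab_centralises_kernel[OF E] by force
  qed blast
  then show ?thesis
    unfolding Cx_iff using L \<gamma> decomp[folded graph] by blast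
qed

lemma Cx_elem_ab:
  assumes L: "L \<in> Leta P p d act rho eta" and Y: "Y \<in> Cx P p d m act rho etax x (tL L) L"
  shows "elem_ab p G Y"
proof -
  obtain \<gamma> Q where Y: "Y = ((\<lambda>l. (l, madd (M kk) (tL L l) (\<gamma> l))) ` L) <#>\<^bsub>G\<^esub> Q"
    and \<gamma>: "\<gamma> \<in> Z1 P L (M kk)" and Q: "Q \<subseteq> N" "elem_ab p G Q"
    and Qc: "\<forall>l\<in>L. \<forall>u. (\<one>\<^bsub>P\<^esub>, u) \<in> Q \<longrightarrow> mact (M kk) u l = u"
    using Y unfolding Cx_iff Ox_iff by blast
  have c: "twisted_cocycle P L (M kk) \<tau>x (\<lambda>l. madd (M kk) (tL L l) (\<gamma> l))"
    by (rule twisted_cocycle_add[OF Leta_subset[OF L] tL_twisted_cocycle[OF L] \<gamma>])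
  note cM = twisted_cocycleD(1)[OF c]
  have "a \<otimes>\<^bsub>G\<^esub> b = b \<otimes>\<^bsub>G\<^esub> a"
    if a: "a \<in> (\<lambda>l. (l, madd (M kk) (tL L l) (\<gamma> l))) ` L" and b: "b \<in> Q" for a b
  proof -
    obtain l where l: "l \<in> L" "a = (l, madd (M kk) (tL L l) (\<gamma> l))" using a by blast
    obtain u where u: "b = (\<one>\<^bsub>P\<^esub>, u)" "u \<in> mcar (M kk)" using b Q(1) by auto
    show ?thesis
      using commute_kernel_iff[OF subsetD[OF Leta_subset[OF L] l(1)] cM[OF l(1)] u(2)] Qc l b u by simp
  qed
  then show ?thesis
    unfolding Y by (rule Gg.elem_ab_set_mult[OF graph_elem_ab[OF Leta_elem_ab[OF L] c] Q(2)])
qed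

lemma Cx_fst_image:
  assumes L: "L \<in> Leta P p d act rho eta" and Y: "Y \<in> Cx P p d m act rho etax x (tL L) L"
  shows "fst ` Y = L"
proof -
  obtain \<gamma> Q where Y: "Y = ((\<lambda>l. (l, madd (M kk) (tL L l) (\<gamma> l))) ` L) <#>\<^bsub>G\<^esub> Q"
    and Q: "Q \<subseteq> N" "elem_ab p G Q"
    using Y unfolding Cx_iff Ox_iff by blast
  have "\<one>\<^bsub>G\<^esub> \<in> Q" using Q(2) subgroup.one_closed unfolding elem_ab_def by blast
  then show ?thesis unfolding Y using Q(1) Leta_subset[OF L] by (rule fst_graph_set_mult)
qed

end

theorem theorem5p3:

  fixes p d m l x :: nat
    and P :: "'g monoid"
    and act :: "(nat \<Rightarrow> nat \<Rightarrow> int) \<Rightarrow> 'g \<Rightarrow> (nat \<Rightarrow> nat \<Rightarrow> int)"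
    and rho :: "'g \<Rightarrow> 'g \<Rightarrow> (nat \<Rightarrow> nat \<Rightarrow> int)"
    and eta :: "'g \<Rightarrow> 'g \<Rightarrow> 'g \<Rightarrow> (nat \<Rightarrow> nat \<Rightarrow> int)"
    and K :: "nat \<Rightarrow> ('g \<Rightarrow> 'g \<Rightarrow> (nat \<Rightarrow> int)) set"
    and etax :: "'g \<Rightarrow> 'g \<Rightarrow> (nat \<Rightarrow> int)"
    and tL :: "'g set \<Rightarrow> 'g \<Rightarrow> (nat \<Rightarrow> int)"
  assumes p_prime: "Factorial_Ring.prime p"
    and P_group: "group P"
    and P_finite: "finite (carrier P)"
    and P_order: "card (carrier P) = p ^ m"
    and d_pos: "d \<ge> 1"
    and act_closed: "\<forall>t\<in>Zpd p d. \<forall>g\<in>carrier P. act t g \<in> Zpd p d"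
    and act_one: "\<forall>t\<in>Zpd p d. act t \<one>\<^bsub>P\<^esub> = t"
    and act_mult: "\<forall>t\<in>Zpd p d. \<forall>g\<in>carrier P. \<forall>h\<in>carrier P.
                     act (act t g) h = act t (g \<otimes>\<^bsub>P\<^esub> h)"
    and act_add: "\<forall>t\<in>Zpd p d. \<forall>s\<in>Zpd p d. \<forall>g\<in>carrier P.
                     act (zadd p t s) g = zadd p (act t g) (act s g)"
    and act_lin: "\<forall>a\<in>zp p. \<forall>t\<in>Zpd p d. \<forall>g\<in>carrier P.
                     act (zpscal p a t) g = zpscal p a (act t g)"
    and rho_cocycle: "rho \<in> Z2 P (carrier P) (Tmod p d act)"
    and l_pos: "l \<ge> 1"
    and T_gamma: "lcsS P p d act rho (l - 1) = Tsub P p d"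
    and T_series_index: "\<forall>i. card (rcosets\<^bsub>(Sgrp P p d act rho)\<lparr>carrier := Tser P p d act rho i\<rparr>\<^esub>
                                   (Tser P p d act rho (Suc i))) = p"
    and eta_cocycle: "eta \<in> Z3 P (carrier P) (Tmod p d act)"
    and K_sub_J: "\<forall>y. K y \<subseteq> Jc P p d m act y"
    and K_zero: "\<forall>y. (\<lambda>g h. mzero (Mx p d m act y)) \<in> K y"
    and K_add: "\<forall>y. \<forall>\<sigma>\<in>K y. \<forall>\<tau>\<in>K y. Cadd (Mx p d m act y) \<sigma> \<tau> \<in> K y"
    and K_neg: "\<forall>y. \<forall>\<sigma>\<in>K y. (\<lambda>g h. mneg (Mx p d m act y) (\<sigma> g h)) \<in> K y"
    and K_inter: "\<forall>y. K y \<inter> Ic P p d m act y = {(\<lambda>g h. mzero (Mx p d m act y))}"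
    and K_span: "\<forall>y. \<forall>\<sigma>\<in>Z2 P (carrier P) (Mx p d m act y).
                   \<exists>\<kappa>\<in>K y. \<exists>\<iota>\<in>Ic P p d m act y. \<sigma> = Cadd (Mx p d m act y) \<kappa> \<iota>"
    and K_mul: "\<forall>y. K (Suc y) = (\<lambda>\<sigma> g h. mulM p (y + 3 * m) (\<sigma> g h)) ` K y"
    and etax_K: "etax \<in> K x"
    and etax_eta: "(\<lambda>g h k. msub (Tmod p d act) (conn P p d m act x etax g h k) (eta g h k))
                     \<in> B3 P (carrier P) (Tmod p d act)"
    and tL_compl: "\<forall>L\<in>Leta P p d act rho eta.
                     (\<forall>l\<in>L. tL L l \<in> mcar (Mx p d m act x))
                     \<and> subgroup (CL p d m act x (tL L) (\<lambda>_. mzero (Mx p d m act x)) L)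
                                 (Gx P p d m act rho etax x)"
  shows "{E. elem_ab p (Gx P p d m act rho etax x) E}
           = (\<Union>L\<in>Leta P p d act rho eta. Cx P p d m act rho etax x (tL L) L)
         \<and> disjoint_family_on (\<lambda>L. Cx P p d m act rho etax x (tL L) L) (Leta P p d act rho eta)"
proof -
  \<comment> \<open>The hypotheses on d, l, the lower central series, the series T_i and the remaining
      properties of the complements K are part of the setting but not needed here.\<close>
  have p_pos: "p > 0" using p_prime prime_gt_0_nat by blast
  have T: "padic_module P p d act"
    by (rule padic_module.intro[OF p_pos P_group act_closed act_one act_mult act_add act_lin])
  have etaxJ: "etax \<in> Jc P p d m act x" using K_sub_J etax_K by blast
  have "etax \<in> Z2 P (carrier P) (Mmod p d (x + 3 * m) act)"
    using etaxJ unfolding Jc_def Mx_def by auto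
  then have tau: "(\<lambda>g h. madd (Mmod p d (x + 3 * m) act) (trunc (x + 3 * m) (rho g h)) (etax g h))
      \<in> Z2 P (carrier P) (Mmod p d (x + 3 * m) act)"
    by (rule padic_module.Z2_madd[OF T padic_module.Z2_trunc[OF T rho_cocycle]])
  interpret coclass_member P p d act m x rho etax eta tL
    by (rule coclass_member.intro[OF twisted_ext.intro[OF T twisted_ext_axioms.intro[OF tau p_prime P_finite]]
          coclass_member_axioms.intro[OF P_order rho_cocycle eta_cocycle etaxJ etax_eta tL_compl]])
  have "{E. elem_ab p G E} = (\<Union>L\<in>Leta P p d act rho eta. Cx P p d m act rho etax x (tL L) L)"
    using elem_ab_in_Cx Cx_elem_ab by blast
  moreover have "disjoint_family_on (\<lambda>L. Cx P p d m act rho etax x (tL L) L) (Leta P p d act rho eta)"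
    unfolding disjoint_family_on_def using Cx_fst_image by blast
  ultimately show ?thesis unfolding Gx_eq by blast
qed

end
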